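(* Let $\mathbf{\Omega}_1=\{\mathbf{x}\in\mathbb{R}^n: g_{1,\ell}(\mathbf{x})\ge0,\ \ell=1,\ldots,m_1\}$ and $\mathbf{\Omega}_2=\{\mathbf{u}\in\mathbb{R}^p: g_{2,\ell}(\mathbf{u})\ge0,\ \ell=1,\ldots,m_2\}$ with polynomials $g_{1,\ell}\in\mathbb{R}[\mathbf{x}]$, $g_{2,\ell}\in\mathbb{R}[\mathbf{u}]$, and let $\lambda$ be the Lebesgue measure on $\mathbf{\Omega}_1$. Let $f\in\mathbb{R}[\mathbf{x},\mathbf{u}]$, let $F:\mathbf{\Omega}_1\to\mathbb{R}$, $F(\mathbf{x})=\min\{f(\mathbf{x},\mathbf{u}):\mathbf{u}\in\mathbf{\Omega}_2\}$, and $\mathbf{G}=\{\mathbf{x}\in\mathbf{\Omega}_1: f(\mathbf{x},\mathbf{u})\ge0\ \forall\mathbf{u}\in\mathbf{\Omega}_2\}$. Assume $\mathbf{\Omega}_1\times\mathbf{\Omega}_2$ is compact (and nonempty) and that the quadratic module in $\mathbb{R}[\mathbf{x},\mathbf{u}]$ generated by $g_{1,1},\ldots,g_{1,m_1},g_{2,1},\ldots,g_{2,m_2}$ is Archimedean. For $d\in\mathbb{N}$ consider $$\rho_d=\sup_{p\in\mathbb{R}[\mathbf{x}]_{2d}}\Big\{\int_{\mathbf{\Omega}_1}p\,d\lambda:\ f(\mathbf{x},\mathbf{u})-p(\mathbf{x})=\sigma_0(\mathbf{x},\mathbf{u})+\sum_{\ell=1}^{m_1}\sigma_{1,\ell}(\mathbf{x},\mathbf{u})g_{1,\ell}(\mathbf{x})+\sum_{\ell=1}^{m_2}\sigma_{2,\ell}(\mathbf{x},\mathbf{u})g_{2,\ell}(\mathbf{u}),\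 \sigma_0\in\Sigma[\mathbf{x},\mathbf{u}]_d,\ \sigma_{i,\ell}\in\Sigma[\mathbf{x},\mathbf{u}]_{d-d_{i,\ell}}\Big\},$$ where $d_{i,\ell}=\lceil\deg(g_{i,\ell})/2\rceil$, and assume that for all sufficiently large $d$ this program has an optimal solution $p_d$. Let $\mathbf{G}_d=\{\mathbf{x}\in\mathbf{\Omega}_1: p_d(\mathbf{x})\ge0\}$ (so that $\mathbf{G}_d\subset\mathbf{G}$). If $\lambda(\{\mathbf{x}\in\mathbf{\Omega}_1:F(\mathbf{x})=0\})=0$, then $$\lim_{d\to\infty}\int_{\mathbf{\Omega}_1}|F-p_d|\,d\lambda=0\quad\text{and}\quad\lim_{d\to\infty}\lambda(\mathbf{G}\setminus\mathbf{G}_d)=0.$$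
   Context: $\mathbb{R}[\mathbf{x}]_{k}$ denotes polynomials of degree at most $k$. $\Sigma[\mathbf{x},\mathbf{u}]_k$ denotes the set of sums of squares of polynomials in $(\mathbf{x},\mathbf{u})$ of degree at most $k$ (SOS polynomials of degree at most $2k$). The quadratic module generated by polynomials $h_1,\ldots,h_r$ is $\{\sigma_0+\sum_i\sigma_ih_i:\sigma_i\text{ SOS}\}$; it is Archimedean if it contains $M-\|(\mathbf{x},\mathbf{u})\|^2$ for some $M>0$. *)

theory Defs
  imports "HOL-Analysis.Analysis"
begin

definition mono_deg :: "('i::finite \<Rightarrow> nat) \<Rightarrow> nat" where
  "mono_deg \<alpha> = (\<Sum>i\<in>UNIV. \<alpha> i)"

definition monom :: "('i::finite \<Rightarrow> nat) \<Rightarrow> real^'i \<Rightarrow> real" where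
  "monom \<alpha> x = (\<Prod>i\<in>UNIV. (x $ i) ^ \<alpha> i)"

definition poly_le :: "nat \<Rightarrow> (real^'i::finite \<Rightarrow> real) \<Rightarrow> bool" where
  "poly_le k h \<longleftrightarrow> (\<exists>c :: ('i \<Rightarrow> nat) \<Rightarrow> real.
      finite {\<alpha>. c \<alpha> \<noteq> 0} \<and> (\<forall>\<alpha>. c \<alpha> \<noteq> 0 \<longrightarrow> mono_deg \<alpha> \<le> k) \<and>
      (\<forall>x. h x = (\<Sum>\<alpha>\<in>{\<alpha>. c \<alpha> \<noteq> 0}. c \<alpha> * monom \<alpha> x)))"

definition is_poly :: "(real^'i::finite \<Rightarrow> real) \<Rightarrow> bool" where
  "is_poly h \<longleftrightarrow> (\<exists>k. poly_le k h)"

definition pdeg :: "(real^'i::finite \<Rightarrow> real) \<Rightarrow> nat" where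
  "pdeg h = (LEAST k. poly_le k h)"

definition poly2_le :: "nat \<Rightarrow> (real^'n::finite \<Rightarrow> real^'p::finite \<Rightarrow> real) \<Rightarrow> bool" where
  "poly2_le k h \<longleftrightarrow> (\<exists>c :: (('n \<Rightarrow> nat) \<times> ('p \<Rightarrow> nat)) \<Rightarrow> real.
      finite {\<gamma>. c \<gamma> \<noteq> 0} \<and> (\<forall>\<alpha> \<beta>. c (\<alpha>, \<beta>) \<noteq> 0 \<longrightarrow> mono_deg \<alpha> + mono_deg \<beta> \<le> k) \<and>
      (\<forall>x u. h x u = (\<Sum>\<gamma>\<in>{\<gamma>. c \<gamma> \<noteq> 0}. c \<gamma> * monom (fst \<gamma>) x * monom (snd \<gamma>) u)))"

definition is_poly2 :: "(real^'n::finite \<Rightarrow> real^'p::finite \<Rightarrow> real) \<Rightarrow> bool" where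
  "is_poly2 h \<longleftrightarrow> (\<exists>k. poly2_le k h)"

definition sos2_le :: "nat \<Rightarrow> (real^'n::finite \<Rightarrow> real^'p::finite \<Rightarrow> real) \<Rightarrow> bool" where
  "sos2_le k s \<longleftrightarrow> (\<exists>qs. (\<forall>q\<in>set qs. poly2_le k q) \<and>
      (\<forall>x u. s x u = (\<Sum>q\<leftarrow>qs. (q x u)^2)))"

definition is_sos2 :: "(real^'n::finite \<Rightarrow> real^'p::finite \<Rightarrow> real) \<Rightarrow> bool" where
  "is_sos2 s \<longleftrightarrow> (\<exists>k. sos2_le k s)"

definition semialg :: "(nat \<Rightarrow> real^'i::finite \<Rightarrow> real) \<Rightarrow> nat \<Rightarrow> (real^'i) set" where
  "semialg g m = {x. \<forall>l<m. 0 \<le> g l x}"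

definition qmodule ::
  "(nat \<Rightarrow> real^'n::finite \<Rightarrow> real) \<Rightarrow> nat \<Rightarrow> (nat \<Rightarrow> real^'p::finite \<Rightarrow> real) \<Rightarrow> nat
    \<Rightarrow> (real^'n \<Rightarrow> real^'p \<Rightarrow> real) set" where
  "qmodule g1 m1 g2 m2 = {h. \<exists>s0 s1 s2. is_sos2 s0 \<and> (\<forall>l<m1. is_sos2 (s1 l)) \<and> (\<forall>l<m2. is_sos2 (s2 l)) \<and>
      (\<forall>x u. h x u = s0 x u + (\<Sum>l<m1. s1 l x u * g1 l x) + (\<Sum>l<m2. s2 l x u * g2 l u))}"

definition archimedean_qm ::
  "(nat \<Rightarrow> real^'n::finite \<Rightarrow> real) \<Rightarrow> nat \<Rightarrow> (nat \<Rightarrow> real^'p::finite \<Rightarrow> real) \<Rightarrow> nat \<Rightarrow> bool" where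
  "archimedean_qm g1 m1 g2 m2 \<longleftrightarrow>
     (\<exists>M>0. (\<lambda>x u. M - ((norm x)^2 + (norm u)^2)) \<in> qmodule g1 m1 g2 m2)"

definition rho_feasible ::
  "(real^'n::finite \<Rightarrow> real^'p::finite \<Rightarrow> real) \<Rightarrow> (nat \<Rightarrow> real^'n \<Rightarrow> real) \<Rightarrow> nat
    \<Rightarrow> (nat \<Rightarrow> real^'p \<Rightarrow> real) \<Rightarrow> nat \<Rightarrow> nat \<Rightarrow> (real^'n \<Rightarrow> real) set" where
  "rho_feasible f g1 m1 g2 m2 d = {p. poly_le (2*d) p \<and>
     (\<exists>s0 s1 s2. sos2_le d s0 \<and>
        (\<forall>l<m1. sos2_le (d - nat \<lceil>real (pdeg (g1 l)) / 2\<rceil>) (s1 l)) \<and>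
        (\<forall>l<m2. sos2_le (d - nat \<lceil>real (pdeg (g2 l)) / 2\<rceil>) (s2 l)) \<and>
        (\<forall>x u. f x u - p x = s0 x u + (\<Sum>l<m1. s1 l x u * g1 l x) + (\<Sum>l<m2. s2 l x u * g2 l u)))}"

definition rho_optimal ::
  "(real^'n::finite \<Rightarrow> real^'p::finite \<Rightarrow> real) \<Rightarrow> (nat \<Rightarrow> real^'n \<Rightarrow> real) \<Rightarrow> nat
    \<Rightarrow> (nat \<Rightarrow> real^'p \<Rightarrow> real) \<Rightarrow> nat \<Rightarrow> nat \<Rightarrow> (real^'n \<Rightarrow> real) \<Rightarrow> bool" where
  "rho_optimal f g1 m1 g2 m2 d p \<longleftrightarrow> p \<in> rho_feasible f g1 m1 g2 m2 d \<and>
     (\<forall>q\<in>rho_feasible f g1 m1 g2 m2 d.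
        (LINT x:semialg g1 m1|lborel. q x) \<le> (LINT x:semialg g1 m1|lborel. p x))"

end

theory Submission
  imports Defs
begin

(* Putinar's Positivstellensatz is proved abstractly, following Jacobi.  In an Archimedean
   quadratic module M of a ring A of real functions, the elements a with a + eps in M for all
   eps > 0 form a preordering; the key step is Jacobi's lemma that products of bounded elements
   of M lie in it.  A maximal preordering containing it is total, and taking for each a the
   supremum of the reals r with a - r in the preordering defines a ring character A -> R that
   is nonnegative on M.  If h is positive under all such characters, adjoining -h to the
   preordering must produce -1, and this forces h - eta in M for some eta > 0.  For polynomials
   the characters are point evaluations at points of Omega_1 x Omega_2, so f - p lies in the
   quadratic module whenever f - p > 0 there.

   F is continuous on the compact set Omega_1, so Stone-Weierstrass gives polynomials p with
   F - eps <= p < F - eps/3; by Putinar they are feasible for all large d, and every feasible p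
   satisfies p <= F on Omega_1.  Optimality of p_d then gives
   int |F - p_d| = int F - int p_d <= int F - int p <= eps * lambda(Omega_1).  Finally
   G \ G_d lies in {0 <= F <= delta} u {|F - p_d| >= delta}: the first set shrinks to the null
   set {F = 0} as delta -> 0, the second has measure at most (int |F - p_d|) / delta by Markov's
   inequality. *)

section \<open>Archimedean quadratic modules of real functions\<close>

locale archimedean_qmodule =
  fixes A :: "('z \<Rightarrow> real) set" and M :: "('z \<Rightarrow> real) set"
  assumes A_const: "(\<lambda>z. c) \<in> A"
    and A_add: "a \<in> A \<Longrightarrow> b \<in> A \<Longrightarrow> (\<lambda>z. a z + b z) \<in> A"
    and A_mult: "a \<in> A \<Longrightarrow> b \<in> A \<Longrightarrow> (\<lambda>z. a z * b z) \<in> A"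
    and M_in_A: "m \<in> M \<Longrightarrow> m \<in> A"
    and M_add: "a \<in> M \<Longrightarrow> b \<in> M \<Longrightarrow> (\<lambda>z. a z + b z) \<in> M"
    and M_sq_mult: "a \<in> A \<Longrightarrow> m \<in> M \<Longrightarrow> (\<lambda>z. (a z)^2 * m z) \<in> M"
    and M_one: "(\<lambda>z. 1) \<in> M"
    and M_archimedean: "a \<in> A \<Longrightarrow> \<exists>N. (\<lambda>z. N - a z) \<in> M"
    and M_proper: "(\<lambda>z. -1) \<notin> M"
begin

lemma M_sq: "a \<in> A \<Longrightarrow> (\<lambda>z. (a z)^2) \<in> M"
  using M_sq_mult[OF _ M_one] by simp

lemma M_const: "c \<ge> 0 \<Longrightarrow> (\<lambda>z. c) \<in> M"
  using M_sq[OF A_const[of "sqrt c"]] by simp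

lemma M_scale: "c \<ge> 0 \<Longrightarrow> m \<in> M \<Longrightarrow> (\<lambda>z. c * m z) \<in> M"
  using M_sq_mult[OF A_const[of "sqrt c"]] by simp

lemma M_add_const: "m \<in> M \<Longrightarrow> c \<ge> 0 \<Longrightarrow> (\<lambda>z. m z + c) \<in> M"
  using M_add[OF _ M_const] by blast

lemma M_neg_const: "c < 0 \<Longrightarrow> (\<lambda>z. c) \<notin> M"
  using M_scale[of "-1/c" "\<lambda>z. c"] M_proper by auto

lemma A_scale: "a \<in> A \<Longrightarrow> (\<lambda>z. c * a z) \<in> A"
  using A_mult[OF A_const[of c]] by simp

lemma A_uminus: "a \<in> A \<Longrightarrow> (\<lambda>z. - a z) \<in> A"
  using A_scale[of a "-1"] by simp

lemma A_diff: "a \<in> A \<Longrightarrow> b \<in> A \<Longrightarrow> (\<lambda>z. a z - b z) \<in> A"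
  using A_add[OF _ A_uminus, of a b] by simp

lemma A_power: "a \<in> A \<Longrightarrow> (\<lambda>z. a z ^ n) \<in> A"
  by (induction n) (auto intro: A_const dest: A_mult)

lemma M_upper_bound_nonneg:
  assumes "a \<in> A" obtains N where "N \<ge> c" "(\<lambda>z. N - a z) \<in> M"
proof -
  obtain N where "(\<lambda>z. N - a z) \<in> M" using M_archimedean[OF assms] by blast
  from M_add_const[OF this, of "max N c - N"] show ?thesis
    by (intro that[of "max N c"]) auto
qed

lemma M_power_mult_one_minus:
  assumes y: "y \<in> A" "y \<in> M" and y1: "(\<lambda>z. 1 - y z) \<in> M"
  shows "(\<lambda>z. y z ^ k * (1 - y z)) \<in> M"
proof (cases "even k")
  case True
  then obtain j where k: "k = 2*j" by blast
  have "(\<lambda>z. (y z ^ j)^2 * (1 - y z)) \<in> M"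
    by (rule M_sq_mult[OF A_power[OF y(1)] y1])
  thus ?thesis by (simp add: k power_mult[symmetric] mult.commute[of 2])
next
  case False
  then obtain j where k: "k = 2*j+1" using oddE by blast
  have "(\<lambda>z. y z ^ j * (1 - y z)) \<in> A"
    by (rule A_mult[OF A_power[OF y(1)] M_in_A[OF y1]])
  from M_add[OF M_sq_mult[OF this y(2)] M_sq_mult[OF A_power[OF y(1)] y1, of "j+1"]]
  moreover have "y z ^ k = (y z ^ j)^2 * y z" for z
    by (simp add: k power_add power_mult[symmetric] mult.commute)
  ultimately show ?thesis
    by (simp add: power2_eq_square algebra_simps)
qed

lemma M_one_minus_power:
  assumes y: "y \<in> A" "y \<in> M" and y1: "(\<lambda>z. 1 - y z) \<in> M"
  shows "(\<lambda>z. 1 - y z ^ k) \<in> M"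
proof (induction k)
  case 0
  then show ?case using M_const[of 0] by simp
next
  case (Suc k)
  have "(\<lambda>z. (1 - y z ^ k) + y z ^ k * (1 - y z)) = (\<lambda>z. 1 - y z ^ Suc k)"
    by (auto simp: algebra_simps)
  with M_add[OF Suc M_power_mult_one_minus[OF y y1, of k]] show ?case
    by simp
qed

text \<open>The polynomial \<open>X\<^sup>2\<^sup>n - 2nX + 2n - 1\<close>, for \<open>n\<close> a power of two, is a
  sum of squares: \<open>P\<^sub>2\<^sub>n = (X\<^sup>2\<^sup>n - 1)\<^sup>2 + 2 P\<^sub>n\<close>.\<close>

lemma M_bernoulli_mult:
  assumes z: "z \<in> A" and w: "w \<in> M"
  shows "(\<lambda>x. (z x ^ (2 * 2^r) - 2 * 2^r * z x + 2 * 2^r - 1) * w x) \<in> M"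
proof (induction r)
  case 0
  from M_sq_mult[OF A_diff[OF z A_const] w, of 1] show ?case
    by (simp add: power2_eq_square algebra_simps)
next
  case (Suc r)
  have "(\<lambda>x. (z x ^ (2 * 2^r) - 1)^2 * w x
          + 2 * ((z x ^ (2 * 2^r) - 2 * 2^r * z x + 2 * 2^r - 1) * w x)) \<in> M"
    by (rule M_add[OF M_sq_mult[OF A_diff[OF A_power[OF z] A_const] w] M_scale[OF _ Suc]]) simp
  moreover have "z x ^ (2 * 2^Suc r) = (z x ^ (2 * 2^r))^2" for x
    by (simp flip: power_mult)
  ultimately show ?case
    by (simp add: power2_eq_square algebra_simps)
qed

lemma jacobi_parameter:
  fixes N \<epsilon> :: real
  assumes N: "N \<ge> 1" and e: "\<epsilon> > 0"
  obtains r :: nat where "N * ((2 * 2^r - 1) / (2 * 2^r)) ^ (2 * 2^r) / (2 * 2^r - 1) \<le> \<epsilon>"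
proof -
  obtain r :: nat where r: "N / \<epsilon> < 2^r"
    using real_arch_pow[of 2 "N / \<epsilon>"] by auto
  define n :: real where "n = 2^r"
  have n: "n \<ge> 1" "N < \<epsilon> * n"
    using r e by (auto simp: n_def divide_less_eq mult.commute)
  have "N * ((2*n - 1) / (2*n)) ^ (2 * 2^r) / (2*n - 1) \<le> N / (2*n - 1)"
    using n N by (simp add: divide_right_mono power_le_one)
  also have "\<dots> \<le> N / n" using n N by (intro divide_left_mono) auto
  also have "\<dots> < \<epsilon>" using n by (simp add: divide_less_eq)
  finally show ?thesis by (intro that[of r]) (simp add: n_def)
qed

text \<open>The certificate combines \<open>M_bernoulli_mult\<close> at \<open>a (1 - t)\<close>, with
  \<open>a = (2n - 1) / (2n)\<close> and \<open>n = 2\<^sup>r\<close> large, with two correction terms of size \<open>O(N/n)\<close>.\<close>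

lemma M_mult_plus_eps:
  assumes t: "t \<in> A" "t \<in> M" "(\<lambda>z. 1 - t z) \<in> M" and u: "u \<in> M" "(\<lambda>z. N - u z) \<in> M"
    and e: "\<epsilon> > 0"
  shows "(\<lambda>z. t z * u z + \<epsilon>) \<in> M"
proof -
  obtain N' where N': "N' \<ge> 1" "(\<lambda>z. N' - u z) \<in> M"
    using M_add_const[OF u(2), of "max N 1 - N"] by (intro that[of "max N 1"]) auto
  obtain r :: nat where small: "N' * ((2 * 2^r - 1) / (2 * 2^r)) ^ (2 * 2^r) / (2 * 2^r - 1) \<le> \<epsilon>"
    using jacobi_parameter[OF N'(1) e] by blast
  define n :: real where "n = 2^r"
  define a where "a = (2*n - 1) / (2*n)"
  define c where "c = a ^ (2 * 2^r) / (2*n - 1)"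
  have n: "n \<ge> 1" by (simp add: n_def)
  have c: "0 \<le> c" "N' * c \<le> \<epsilon>"
    using n small by (simp add: c_def a_def, simp add: c_def a_def n_def)
  define y where "y = (\<lambda>z. 1 - t z)"
  have y: "y \<in> A" "y \<in> M" "(\<lambda>z. 1 - y z) \<in> M"
    using A_diff[OF A_const t(1)] t(2,3) by (simp_all add: y_def)
  have "(\<lambda>z. (1 / (2*n - 1)) * (((a * y z) ^ (2 * 2^r) - 2 * n * (a * y z) + 2 * n - 1) * u z)
      + c * ((y z ^ 2^r)^2 * (N' - u z)) + (N' * c * (1 - y z ^ (2 * 2^r)) + (\<epsilon> - N' * c))) \<in> M"
  proof (intro M_add_const M_add M_scale M_sq_mult A_power M_one_minus_power)
    show "(\<lambda>z. ((a * y z) ^ (2 * 2^r) - 2 * n * (a * y z) + 2 * n - 1) * u z) \<in> M"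
      using M_bernoulli_mult[OF A_scale[OF y(1)] u(1)] by (simp add: n_def)
  qed (use c N' y n in auto)
  moreover have "(1 / (2*n - 1)) * (((a * y z) ^ (2 * 2^r) - 2 * n * (a * y z) + 2 * n - 1) * u z)
      + c * ((y z ^ 2^r)^2 * (N' - u z)) + (N' * c * (1 - y z ^ (2 * 2^r)) + (\<epsilon> - N' * c))
      = t z * u z + \<epsilon>" for z
  proof -
    have identity: "(1 / (2*n - 1)) * ((c * (2*n - 1) * Y - 2 * n * (a * v) + 2 * n - 1) * w)
        + c * (Y * (N' - w)) + (N' * c * (1 - Y) + (\<epsilon> - N' * c)) = (1 - v) * w + \<epsilon>" for v w Y
      using n by (simp add: a_def field_simps)
    have "(a * y z) ^ (2 * 2^r) = c * (2*n - 1) * y z ^ (2 * 2^r)"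
      using n by (simp add: c_def power_mult_distrib)
    moreover have "(y z ^ 2^r)^2 = y z ^ (2 * 2^r)"
      by (simp flip: power_mult add: mult.commute)
    ultimately show ?thesis
      using identity[where v="y z" and w="u z" and Y="y z ^ (2 * 2^r)"] by (simp add: y_def)
  qed
  ultimately show ?thesis by (simp only:)
qed

definition M_closure :: "('z \<Rightarrow> real) set" where
  "M_closure = {a \<in> A. \<forall>\<epsilon>>0. (\<lambda>z. a z + \<epsilon>) \<in> M}"

definition is_preordering :: "('z \<Rightarrow> real) set \<Rightarrow> bool" where
  "is_preordering P \<longleftrightarrow> P \<subseteq> A \<and> (\<forall>a\<in>P. \<forall>b\<in>P. (\<lambda>z. a z + b z) \<in> P) \<and>
     (\<forall>a\<in>P. \<forall>b\<in>P. (\<lambda>z. a z * b z) \<in> P) \<and> (\<forall>a\<in>A. (\<lambda>z. (a z)^2) \<in> P) \<and> (\<lambda>z. -1) \<notin> P"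

lemma M_subset_M_closure: "M \<subseteq> M_closure"
  unfolding M_closure_def using M_in_A M_add_const by auto

lemma M_closure_subset_A: "M_closure \<subseteq> A"
  unfolding M_closure_def by auto

lemma M_closure_add:
  assumes a: "a \<in> M_closure" and b: "b \<in> M_closure"
  shows "(\<lambda>z. a z + b z) \<in> M_closure"
proof -
  have "(\<lambda>z. a z + b z + \<epsilon>) \<in> M" if "\<epsilon> > 0" for \<epsilon>
  proof -
    have "(\<lambda>z. a z + \<epsilon>/2) \<in> M" "(\<lambda>z. b z + \<epsilon>/2) \<in> M"
      using a b that unfolding M_closure_def by auto
    from M_add[OF this] show ?thesis by (simp add: algebra_simps)
  qed
  thus ?thesis using a b A_add unfolding M_closure_def by auto
qed

lemma M_mult_in_M_closure:
  assumes a: "a \<in> M" and b: "b \<in> M"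
  shows "(\<lambda>z. a z * b z) \<in> M_closure"
proof -
  obtain Na where Na: "Na \<ge> 1" "(\<lambda>z. Na - a z) \<in> M"
    using M_upper_bound_nonneg[OF M_in_A[OF a]] by blast
  obtain Nb where Nb: "(\<lambda>z. Nb - b z) \<in> M"
    using M_archimedean[OF M_in_A[OF b]] by blast
  define t where "t = (\<lambda>z. a z / Na)"
  have t: "t \<in> A" "t \<in> M" "(\<lambda>z. 1 - t z) \<in> M"
    using A_scale[OF M_in_A[OF a], of "1/Na"] M_scale[OF _ a, of "1/Na"] M_scale[OF _ Na(2), of "1/Na"] Na(1)
    by (simp_all add: t_def diff_divide_distrib)
  have "(\<lambda>z. a z * b z + \<epsilon>) \<in> M" if "\<epsilon> > 0" for \<epsilon>
  proof -
    have "(\<lambda>z. t z * b z + \<epsilon> / Na) \<in> M"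
      by (rule M_mult_plus_eps[OF t b Nb]) (use that Na in simp)
    from M_scale[OF _ this, of Na] Na(1) show ?thesis
      by (simp add: t_def algebra_simps)
  qed
  thus ?thesis unfolding M_closure_def using A_mult M_in_A a b by auto
qed

lemma M_closure_mult:
  assumes a: "a \<in> M_closure" and b: "b \<in> M_closure"
  shows "(\<lambda>z. a z * b z) \<in> M_closure"
proof -
  have aA: "a \<in> A" and bA: "b \<in> A" using a b M_closure_subset_A by auto
  obtain Na where Na: "Na \<ge> 0" "(\<lambda>z. Na - a z) \<in> M"
    using M_upper_bound_nonneg[OF aA] by blast
  obtain Nb where Nb: "Nb \<ge> 0" "(\<lambda>z. Nb - b z) \<in> M"
    using M_upper_bound_nonneg[OF bA] by blast
  have "(\<lambda>z. a z * b z + \<epsilon>) \<in> M" if e: "\<epsilon> > 0" for \<epsilon>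
  proof -
    define \<delta> where "\<delta> = min 1 (\<epsilon> / (2 * (Na + Nb + 1)))"
    have \<delta>: "\<delta> > 0" "\<delta> \<le> 1" using e Na Nb by (auto simp: \<delta>_def)
    have "\<delta> * \<delta> + \<delta> * Na + \<delta> * Nb \<le> \<delta> * (Na + Nb + 1)"
      using \<delta> by (simp add: algebra_simps mult_left_le_one_le)
    also have "\<dots> \<le> \<epsilon> / (2 * (Na + Nb + 1)) * (Na + Nb + 1)"
      using Na Nb by (intro mult_right_mono) (auto simp: \<delta>_def)
    also have "\<dots> = \<epsilon> / 2"
      using Na Nb by (simp add: field_simps)
    finally have small: "\<delta> * \<delta> + \<delta> * Na + \<delta> * Nb \<le> \<epsilon> / 2" .
    have "(\<lambda>z. a z + \<delta>) \<in> M" "(\<lambda>z. b z + \<delta>) \<in> M"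
      using a b \<delta> unfolding M_closure_def by auto
    from M_mult_in_M_closure[OF this] e
    have prod: "(\<lambda>z. (a z + \<delta>) * (b z + \<delta>) + \<epsilon>/2) \<in> M"
      unfolding M_closure_def by auto
    have "(\<lambda>z. ((a z + \<delta>) * (b z + \<delta>) + \<epsilon>/2) + (\<delta> * (Na - a z) + \<delta> * (Nb - b z))
             + (\<epsilon>/2 - (\<delta> * \<delta> + \<delta> * Na + \<delta> * Nb))) \<in> M"
      by (rule M_add_const[OF M_add[OF prod M_add[OF M_scale[OF _ Na(2)] M_scale[OF _ Nb(2)]]]])
         (use \<delta> small in auto)
    then show ?thesis by (simp add: algebra_simps)
  qed
  thus ?thesis unfolding M_closure_def using A_mult aA bA by auto
qed

lemma minus_one_notin_M_closure: "(\<lambda>z. -1) \<notin> M_closure"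
proof
  assume "(\<lambda>z. -1) \<in> M_closure"
  hence "(\<lambda>z. -1 + \<epsilon>) \<in> M" if "\<epsilon> > 0" for \<epsilon>
    using that unfolding M_closure_def by auto
  from this[of "1/2"] show False using M_neg_const[of "-1/2"] by simp
qed

lemma is_preordering_M_closure: "is_preordering M_closure"
  unfolding is_preordering_def
  using M_closure_subset_A M_closure_add M_closure_mult M_subset_M_closure M_sq
    minus_one_notin_M_closure by auto

context
  fixes P assumes P: "is_preordering P"
begin

lemma preordering_subset_A: "P \<subseteq> A"
  and preordering_add: "a \<in> P \<Longrightarrow> b \<in> P \<Longrightarrow> (\<lambda>z. a z + b z) \<in> P"
  and preordering_mult: "a \<in> P \<Longrightarrow> b \<in> P \<Longrightarrow> (\<lambda>z. a z * b z) \<in> P"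
  and preordering_sq: "a \<in> A \<Longrightarrow> (\<lambda>z. (a z)^2) \<in> P"
  and preordering_proper: "(\<lambda>z. -1) \<notin> P"
  using P unfolding is_preordering_def by auto

lemma preordering_const: "c \<ge> 0 \<Longrightarrow> (\<lambda>z. c) \<in> P"
  using preordering_sq[OF A_const[of "sqrt c"]] by simp

lemma preordering_scale: "c \<ge> 0 \<Longrightarrow> p \<in> P \<Longrightarrow> (\<lambda>z. c * p z) \<in> P"
  using preordering_mult[OF preordering_const] by blast

lemma preordering_add_const: "p \<in> P \<Longrightarrow> c \<ge> 0 \<Longrightarrow> (\<lambda>z. p z + c) \<in> P"
  using preordering_add[OF _ preordering_const] by blast

lemma preordering_neg_const: "c < 0 \<Longrightarrow> (\<lambda>z. c) \<notin> P"
  using preordering_scale[of "-1/c" "\<lambda>z. c"] preordering_proper by fastforce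

end

lemma exists_maximal_preordering:
  assumes Q: "is_preordering Q"
  obtains P where "is_preordering P" "Q \<subseteq> P" "\<And>P'. is_preordering P' \<Longrightarrow> P \<subseteq> P' \<Longrightarrow> P' = P"
proof -
  have "\<exists>P\<in>{P. is_preordering P \<and> Q \<subseteq> P}. \<forall>X\<in>{P. is_preordering P \<and> Q \<subseteq> P}. P \<subseteq> X \<longrightarrow> X = P"
  proof (rule subset_Zorn_nonempty)
    fix C assume C: "C \<noteq> {}" "subset.chain {P. is_preordering P \<and> Q \<subseteq> P} C"
    hence Cs: "\<And>X. X \<in> C \<Longrightarrow> is_preordering X \<and> Q \<subseteq> X"
      and Cc: "\<And>X Y. X \<in> C \<Longrightarrow> Y \<in> C \<Longrightarrow> X \<subseteq> Y \<or> Y \<subseteq> X"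
      by (auto simp: subset_chain_def)
    have closed: "(\<lambda>z. a z + b z) \<in> \<Union>C \<and> (\<lambda>z. a z * b z) \<in> \<Union>C" if ab: "a \<in> \<Union>C" "b \<in> \<Union>C" for a b
    proof -
      obtain X Y where XY: "X \<in> C" "Y \<in> C" "a \<in> X" "b \<in> Y" using ab by auto
      from Cc[OF XY(1,2)] show ?thesis
        using XY Cs preordering_add preordering_mult by blast
    qed
    have "is_preordering (\<Union>C)"
      unfolding is_preordering_def
    proof (intro conjI ballI)
      show "\<Union>C \<subseteq> A" using Cs preordering_subset_A by blast
      show "(\<lambda>z. -1) \<notin> \<Union>C" using Cs preordering_proper by blast
      show "(\<lambda>z. (a z)^2) \<in> \<Union>C" if "a \<in> A" for a
        using C(1) Cs preordering_sq[OF _ that] by blast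
    qed (use closed in auto)
    thus "\<Union>C \<in> {P. is_preordering P \<and> Q \<subseteq> P}" using C(1) Cs by auto
  next
    show "{P. is_preordering P \<and> Q \<subseteq> P} \<noteq> {}" using Q by auto
  qed
  then obtain P where "is_preordering P" "Q \<subseteq> P"
    and "\<forall>X. is_preordering X \<and> Q \<subseteq> X \<longrightarrow> P \<subseteq> X \<longrightarrow> X = P"
    by auto
  then show ?thesis by (intro that) auto
qed

definition adjoin :: "('z \<Rightarrow> real) set \<Rightarrow> ('z \<Rightarrow> real) \<Rightarrow> ('z \<Rightarrow> real) set" where
  "adjoin P a = {f. \<exists>p\<in>P. \<exists>q\<in>P. f = (\<lambda>z. p z + a z * q z)}"

lemma adjoinI: "p \<in> P \<Longrightarrow> q \<in> P \<Longrightarrow> f = (\<lambda>z. p z + a z * q z) \<Longrightarrow> f \<in> adjoin P a"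
  unfolding adjoin_def by blast

lemma is_preordering_adjoin:
  assumes P: "is_preordering P" and a: "a \<in> A" and proper: "(\<lambda>z. -1) \<notin> adjoin P a"
  shows "is_preordering (adjoin P a)" "P \<subseteq> adjoin P a" "a \<in> adjoin P a"
proof -
  note P' = preordering_add[OF P] preordering_mult[OF P]
  have zero: "(\<lambda>z. 0) \<in> P" and one: "(\<lambda>z. 1) \<in> P" using preordering_const[OF P] by auto
  show "P \<subseteq> adjoin P a" by (auto intro: adjoinI[OF _ zero])
  show "a \<in> adjoin P a" by (rule adjoinI[OF zero one]) simp
  have "adjoin P a \<subseteq> A"
    using A_add[OF _ A_mult[OF a]] preordering_subset_A[OF P] by (auto simp: adjoin_def)
  moreover have "(\<lambda>z. f z + g z) \<in> adjoin P a \<and> (\<lambda>z. f z * g z) \<in> adjoin P a"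
    if fg: "f \<in> adjoin P a" "g \<in> adjoin P a" for f g
  proof -
    obtain p1 q1 p2 q2 where pq: "p1 \<in> P" "q1 \<in> P" "p2 \<in> P" "q2 \<in> P"
      and f: "f = (\<lambda>z. p1 z + a z * q1 z)" and g: "g = (\<lambda>z. p2 z + a z * q2 z)"
      using fg unfolding adjoin_def by blast
    have "(\<lambda>z. f z + g z) = (\<lambda>z. (p1 z + p2 z) + a z * (q1 z + q2 z))"
      by (auto simp: f g algebra_simps)
    hence "(\<lambda>z. f z + g z) \<in> adjoin P a"
      by (rule adjoinI[OF P'(1)[OF pq(1,3)] P'(1)[OF pq(2,4)]])
    moreover have "(\<lambda>z. f z * g z)
        = (\<lambda>z. (p1 z * p2 z + (a z)^2 * (q1 z * q2 z)) + a z * (p1 z * q2 z + q1 z * p2 z))"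
      by (auto simp: f g algebra_simps power2_eq_square)
    hence "(\<lambda>z. f z * g z) \<in> adjoin P a"
      by (rule adjoinI[OF P'(1)[OF P'(2)[OF pq(1,3)] P'(2)[OF preordering_sq[OF P a] P'(2)[OF pq(2,4)]]]
            P'(1)[OF P'(2)[OF pq(1,4)] P'(2)[OF pq(2,3)]]])
    ultimately show ?thesis ..
  qed
  moreover have "(\<lambda>z. (b z)^2) \<in> adjoin P a" if "b \<in> A" for b
    using preordering_sq[OF P that] by (auto intro: adjoinI[OF _ zero])
  ultimately show "is_preordering (adjoin P a)"
    unfolding is_preordering_def using proper by blast
qed

text \<open>If neither \<open>a\<close> nor \<open>-a\<close> can be adjoined, then \<open>-1 = p\<^sub>1 + a q\<^sub>1 = p\<^sub>2 - a q\<^sub>2\<close>,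
  and \<open>p\<^sub>1 + p\<^sub>2 + p\<^sub>1 p\<^sub>2 + a\<^sup>2 q\<^sub>1 q\<^sub>2 = -1\<close> lies in \<open>P\<close>.\<close>

lemma maximal_preordering_total:
  assumes P: "is_preordering P" and max: "\<And>P'. is_preordering P' \<Longrightarrow> P \<subseteq> P' \<Longrightarrow> P' = P"
    and a: "a \<in> A"
  shows "a \<in> P \<or> (\<lambda>z. - a z) \<in> P"
proof (rule ccontr)
  assume not_total: "\<not> (a \<in> P \<or> (\<lambda>z. - a z) \<in> P)"
  have "(\<lambda>z. -1) \<in> adjoin P b" if "b \<in> A" "b \<notin> P" for b
    using is_preordering_adjoin[OF P that(1)] max that(2) by metis
  from this[OF a] this[OF A_uminus[OF a]] not_total obtain p1 q1 p2 q2
    where pq: "p1 \<in> P" "q1 \<in> P" "p2 \<in> P" "q2 \<in> P"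
      and "(\<lambda>z. -1) = (\<lambda>z. p1 z + a z * q1 z)" "(\<lambda>z. -1) = (\<lambda>z. p2 z + - a z * q2 z)"
    unfolding adjoin_def by blast
  then have 1: "p1 z = -1 - a z * q1 z" and 2: "p2 z = -1 + a z * q2 z" for z
    by (simp_all add: fun_eq_iff algebra_simps)
  have "(\<lambda>z. (p1 z + p2 z) + (p1 z * p2 z + (a z)^2 * (q1 z * q2 z))) \<in> P"
    using pq preordering_sq[OF P a]
    by (intro preordering_add[OF P] preordering_mult[OF P])
  moreover have "(p1 z + p2 z) + (p1 z * p2 z + (a z)^2 * (q1 z * q2 z)) = -1" for z
    unfolding 1 2 by (simp add: algebra_simps power2_eq_square)
  ultimately show False using preordering_proper[OF P] by simp
qed

definition total_preordering :: "('z \<Rightarrow> real) set \<Rightarrow> bool" where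
  "total_preordering P \<longleftrightarrow> is_preordering P \<and> M \<subseteq> P \<and> (\<forall>a\<in>A. a \<in> P \<or> (\<lambda>z. - a z) \<in> P)"

definition char_of :: "('z \<Rightarrow> real) set \<Rightarrow> ('z \<Rightarrow> real) \<Rightarrow> real" where
  "char_of P a = Sup {r. (\<lambda>z. a z - r) \<in> P}"

definition is_character :: "(('z \<Rightarrow> real) \<Rightarrow> real) \<Rightarrow> bool" where
  "is_character \<phi> \<longleftrightarrow> (\<forall>a\<in>A. \<forall>b\<in>A. \<phi> (\<lambda>z. a z + b z) = \<phi> a + \<phi> b) \<and>
     (\<forall>a\<in>A. \<forall>b\<in>A. \<phi> (\<lambda>z. a z * b z) = \<phi> a * \<phi> b) \<and> (\<forall>c. \<phi> (\<lambda>z. c) = c)"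

context
  fixes P assumes tot: "total_preordering P"
begin

lemma total_preordering_is_preordering: "is_preordering P"
  using tot by (simp add: total_preordering_def)

lemma total_preordering_upper_bound: "a \<in> A \<Longrightarrow> \<exists>N. (\<lambda>z. N - a z) \<in> P"
  using tot M_archimedean unfolding total_preordering_def by blast

lemma char_of_bounds:
  assumes a: "a \<in> A"
  shows "r < char_of P a \<Longrightarrow> (\<lambda>z. a z - r) \<in> P" "char_of P a < r \<Longrightarrow> (\<lambda>z. r - a z) \<in> P"
proof -
  note P = total_preordering_is_preordering
  define R where "R = {r. (\<lambda>z. a z - r) \<in> P}"
  obtain N1 where "(\<lambda>z. N1 - - a z) \<in> P"
    using total_preordering_upper_bound[OF A_uminus[OF a]] by blast
  hence "- N1 \<in> R" by (simp add: R_def add.commute)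
  hence ne: "R \<noteq> {}" by blast
  obtain N2 where N2: "(\<lambda>z. N2 - a z) \<in> P" using total_preordering_upper_bound[OF a] by blast
  have "s \<le> N2" if "s \<in> R" for s
    using preordering_add[OF P _ N2, of "\<lambda>z. a z - s"] preordering_neg_const[OF P, of "N2 - s"] that
    by (force simp: R_def)
  hence bdd: "bdd_above R" by (auto simp: bdd_above_def)
  show "(\<lambda>z. a z - r) \<in> P" if r: "r < char_of P a"
  proof -
    obtain s where "s \<in> R" "r < s"
      using r less_cSup_iff[OF ne bdd] by (auto simp: char_of_def R_def)
    from preordering_add_const[OF P _ , of "\<lambda>z. a z - s" "s - r"] this show ?thesis
      by (simp add: R_def)
  qed
  show "(\<lambda>z. r - a z) \<in> P" if "char_of P a < r"
  proof -
    have "r \<notin> R" using that cSup_upper[OF _ bdd] by (force simp: char_of_def R_def)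
    with tot A_diff[OF a A_const, of r] show ?thesis
      unfolding total_preordering_def R_def by auto
  qed
qed

lemma char_of_eqI:
  assumes a: "a \<in> A"
    and below: "\<And>r. r < c \<Longrightarrow> (\<lambda>z. a z - r) \<in> P" and above: "\<And>r. c < r \<Longrightarrow> (\<lambda>z. r - a z) \<in> P"
  shows "char_of P a = c"
proof -
  note P = total_preordering_is_preordering
  have incompatible: "False" if "s < t" "(\<lambda>z. a z - t) \<in> P" "(\<lambda>z. s - a z) \<in> P" for s t
    using preordering_add[OF P that(2,3)] preordering_neg_const[OF P, of "s - t"] that(1) by simp
  show ?thesis
  proof (rule ccontr)
    assume "char_of P a \<noteq> c"
    then consider "char_of P a < c" | "c < char_of P a" by linarith
    thus False
    proof cases
      case 1
      then obtain s t where "char_of P a < s" "s < t" "t < c" using dense by (metis dense)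
      thus False using incompatible below char_of_bounds(2)[OF a] by blast
    next
      case 2
      then obtain s t where "c < s" "s < t" "t < char_of P a" by (metis dense)
      thus False using incompatible above char_of_bounds(1)[OF a] by blast
    qed
  qed
qed

lemma char_of_const: "char_of P (\<lambda>z. c) = c"
  using preordering_const[OF total_preordering_is_preordering] by (intro char_of_eqI A_const) auto

lemma char_of_add:
  assumes a: "a \<in> A" and b: "b \<in> A"
  shows "char_of P (\<lambda>z. a z + b z) = char_of P a + char_of P b"
proof (rule char_of_eqI[OF A_add[OF a b]])
  note P = total_preordering_is_preordering
  fix r
  define d where "d = \<bar>char_of P a + char_of P b - r\<bar> / 2"
  assume "r < char_of P a + char_of P b"
  hence "(\<lambda>z. a z - (char_of P a - d)) \<in> P" "(\<lambda>z. b z - (char_of P b - d)) \<in> P"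
    using char_of_bounds(1)[OF a] char_of_bounds(1)[OF b] by (auto simp: d_def)
  from preordering_add[OF P this] show "(\<lambda>z. a z + b z - r) \<in> P"
    using \<open>r < _\<close> by (simp add: d_def algebra_simps)
next
  note P = total_preordering_is_preordering
  fix r
  define d where "d = \<bar>r - char_of P a - char_of P b\<bar> / 2"
  assume "char_of P a + char_of P b < r"
  hence "(\<lambda>z. (char_of P a + d) - a z) \<in> P" "(\<lambda>z. (char_of P b + d) - b z) \<in> P"
    using char_of_bounds(2)[OF a] char_of_bounds(2)[OF b] by (auto simp: d_def)
  from preordering_add[OF P this] show "(\<lambda>z. r - (a z + b z)) \<in> P"
    using \<open>_ < r\<close> by (simp add: d_def algebra_simps)
qed

lemma char_of_uminus: "a \<in> A \<Longrightarrow> char_of P (\<lambda>z. - a z) = - char_of P a"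
  using char_of_add[OF _ A_uminus, of a a] char_of_const[of 0] by simp

lemma char_of_scale:
  assumes a: "a \<in> A"
  shows "char_of P (\<lambda>z. c * a z) = c * char_of P a"
proof -
  note P = total_preordering_is_preordering
  have pos: "char_of P (\<lambda>z. c * b z) = c * char_of P b" if b: "b \<in> A" and c: "c > 0" for b c
  proof (rule char_of_eqI[OF A_scale[OF b]])
    fix r
    assume "r < c * char_of P b"
    hence "r / c < char_of P b" using c by (simp add: divide_less_eq mult.commute)
    hence "(\<lambda>z. b z - r / c) \<in> P" by (rule char_of_bounds(1)[OF b])
    from preordering_scale[OF P _ this, of c] c show "(\<lambda>z. c * b z - r) \<in> P"
      by (simp add: algebra_simps)
  next
    fix r
    assume "c * char_of P b < r"
    hence "char_of P b < r / c" using c by (simp add: less_divide_eq mult.commute)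
    hence "(\<lambda>z. r / c - b z) \<in> P" by (rule char_of_bounds(2)[OF b])
    from preordering_scale[OF P _ this, of c] c show "(\<lambda>z. r - c * b z) \<in> P"
      by (simp add: algebra_simps)
  qed
  consider "c > 0" | "c = 0" | "c < 0" by linarith
  thus ?thesis
  proof cases
    case 3
    with pos[OF A_uminus[OF a], of "- c"] show ?thesis by (simp add: char_of_uminus[OF a])
  qed (use pos[OF a] char_of_const[of 0] in auto)
qed

lemma char_of_nonneg: "p \<in> P \<Longrightarrow> char_of P p \<ge> 0"
proof (rule ccontr)
  note P = total_preordering_is_preordering
  assume p: "p \<in> P" and "\<not> char_of P p \<ge> 0"
  hence neg: "char_of P p < char_of P p / 2" by simp
  from char_of_bounds(2)[OF subsetD[OF preordering_subset_A[OF P] p] neg]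
  have "(\<lambda>z. char_of P p / 2 - p z) \<in> P" .
  from preordering_add[OF P this p] have "(\<lambda>z. char_of P p / 2) \<in> P" by simp
  thus False using preordering_neg_const[OF P, of "char_of P p / 2"] neg by simp
qed

lemma char_of_sq_zero:
  assumes a: "a \<in> A" and a0: "char_of P a = 0"
  shows "char_of P (\<lambda>z. (a z)^2) = 0"
proof (rule char_of_eqI)
  note P = total_preordering_is_preordering
  show "(\<lambda>z. (a z)^2) \<in> A" using A_mult[OF a a] by (simp add: power2_eq_square)
  show "(\<lambda>z. (a z)^2 - r) \<in> P" if "r < 0" for r
    using preordering_add_const[OF P preordering_sq[OF P a], of "- r"] that by simp
  show "(\<lambda>z. r - (a z)^2) \<in> P" if r: "0 < r" for r
  proof -
    have "(\<lambda>z. sqrt r - a z) \<in> P" "(\<lambda>z. a z + sqrt r) \<in> P"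
      using char_of_bounds(2)[OF a, of "sqrt r"] char_of_bounds(1)[OF a, of "- sqrt r"] a0 r by auto
    from preordering_mult[OF P this] show ?thesis
      using r by (simp add: algebra_simps power2_eq_square)
  qed
qed

lemma char_of_sq:
  assumes a: "a \<in> A"
  shows "char_of P (\<lambda>z. (a z)^2) = (char_of P a)^2"
proof -
  define \<alpha> where "\<alpha> = char_of P a"
  define b where "b = (\<lambda>z. a z - \<alpha>)"
  have b: "b \<in> A" "char_of P b = 0"
    using A_diff[OF a A_const] char_of_add[OF a A_const, of "- \<alpha>"] char_of_const
    by (simp_all add: b_def \<alpha>_def)
  have b2: "(\<lambda>z. (b z)^2) \<in> A" using A_mult[OF b(1) b(1)] by (simp add: power2_eq_square)
  have "(\<lambda>z. (a z)^2) = (\<lambda>z. ((b z)^2 + (2*\<alpha>) * b z) + \<alpha>^2)"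
    by (auto simp: b_def power2_eq_square algebra_simps)
  thus ?thesis
    using char_of_add[OF A_add[OF b2 A_scale[OF b(1)]] A_const] char_of_add[OF b2 A_scale[OF b(1)]]
      char_of_sq_zero[OF b] char_of_scale[OF b(1)] char_of_const b(2)
    by (simp add: \<alpha>_def)
qed

lemma char_of_mult:
  assumes a: "a \<in> A" and b: "b \<in> A"
  shows "char_of P (\<lambda>z. a z * b z) = char_of P a * char_of P b"
proof -
  have s: "(\<lambda>z. a z + b z) \<in> A" and d: "(\<lambda>z. a z - b z) \<in> A"
    using A_add[OF a b] A_diff[OF a b] .
  have s2: "(\<lambda>z. (a z + b z)^2) \<in> A" and d2: "(\<lambda>z. (a z - b z)^2) \<in> A"
    using A_mult[OF s s] A_mult[OF d d] by (simp_all add: power2_eq_square)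
  have split: "(\<lambda>z. a z * b z) = (\<lambda>z. (1/4) * (a z + b z)^2 + (-1/4) * (a z - b z)^2)"
    by (auto simp: power2_eq_square algebra_simps)
  have diff: "char_of P (\<lambda>z. a z - b z) = char_of P a - char_of P b"
    using char_of_add[OF a A_uminus[OF b]] char_of_uminus[OF b] by simp
  have "char_of P (\<lambda>z. a z * b z)
      = (1/4) * (char_of P a + char_of P b)^2 + (-1/4) * (char_of P a - char_of P b)^2"
    unfolding split char_of_add[OF A_scale[OF s2] A_scale[OF d2]] char_of_scale[OF s2]
      char_of_scale[OF d2] char_of_sq[OF s] char_of_sq[OF d] char_of_add[OF a b] diff ..
  thus ?thesis by (simp add: power2_eq_square algebra_simps)
qed

lemma is_character_char_of: "is_character (char_of P)"
  unfolding is_character_def using char_of_add char_of_mult char_of_const by blast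

end

lemma exists_character_nonneg:
  assumes P: "is_preordering P" and MP: "M \<subseteq> P"
  obtains \<phi> where "is_character \<phi>" "\<And>p. p \<in> P \<Longrightarrow> \<phi> p \<ge> 0"
proof -
  obtain Q where Q: "is_preordering Q" "P \<subseteq> Q" "\<And>Q'. is_preordering Q' \<Longrightarrow> Q \<subseteq> Q' \<Longrightarrow> Q' = Q"
    using exists_maximal_preordering[OF P] by blast
  have "total_preordering Q"
    unfolding total_preordering_def using Q MP maximal_preordering_total[OF Q(1,3)] by blast
  with Q(2) show ?thesis
    using that[OF is_character_char_of] char_of_nonneg by blast
qed

text \<open>From \<open>h t\<^sub>2 = 1 + t\<^sub>1\<close> and \<open>t\<^sub>2 \<le> N\<close> one gets
  \<open>N (h + \<epsilon> - 1/N) = (h + \<epsilon>) (N - t\<^sub>2) + t\<^sub>1 + \<epsilon> t\<^sub>2\<close>, so the admissible shifts \<open>\<epsilon>\<close> with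
  \<open>h + \<epsilon> \<in> M_closure\<close> can be lowered by \<open>1/N\<close> as long as they are nonnegative.\<close>

lemma M_closure_margin:
  assumes h: "h \<in> A" and t: "t1 \<in> M_closure" "t2 \<in> M_closure"
    and eq: "\<And>z. h z * t2 z = 1 + t1 z"
  obtains \<eta> where "\<eta> > 0" "(\<lambda>z. h z - \<eta>) \<in> M_closure"
proof -
  note T = is_preordering_M_closure
  obtain N where N: "N \<ge> 1" "(\<lambda>z. N - t2 z) \<in> M_closure"
    using M_upper_bound_nonneg[OF subsetD[OF M_closure_subset_A t(2)]] M_subset_M_closure by blast
  define E where "E = {\<epsilon>. (\<lambda>z. h z + \<epsilon>) \<in> M_closure}"
  have step: "\<epsilon> - 1/N \<in> E" if "\<epsilon> \<in> E" "\<epsilon> \<ge> 0" for \<epsilon>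
  proof -
    have "(\<lambda>z. h z + \<epsilon>) \<in> M_closure" using that(1) by (simp add: E_def)
    from preordering_add[OF T preordering_add[OF T preordering_mult[OF T this N(2)] t(1)]
        preordering_scale[OF T that(2) t(2)]]
    have "(\<lambda>z. (h z + \<epsilon>) * (N - t2 z) + t1 z + \<epsilon> * t2 z) \<in> M_closure" .
    moreover have "(h z + \<epsilon>) * (N - t2 z) + t1 z + \<epsilon> * t2 z = N * (h z + (\<epsilon> - 1/N))" for z
      using eq[of z] N(1) by (simp add: algebra_simps)
    ultimately have "(\<lambda>z. N * (h z + (\<epsilon> - 1/N))) \<in> M_closure" by simp
    from preordering_scale[OF T _ this, of "1/N"] N(1) show ?thesis by (simp add: E_def)
  qed
  obtain N1 where "(\<lambda>z. N1 - - h z) \<in> M" using M_archimedean[OF A_uminus[OF h]] by blast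
  hence start: "N1 \<in> E" using M_subset_M_closure by (auto simp: E_def add.commute)
  have "\<exists>\<epsilon>\<in>E. \<epsilon> < 0"
  proof (rule ccontr)
    assume "\<not> (\<exists>\<epsilon>\<in>E. \<epsilon> < 0)"
    hence nonneg: "\<epsilon> \<in> E \<Longrightarrow> \<epsilon> \<ge> 0" for \<epsilon> by force
    have descend: "N1 - k / N \<in> E" for k :: nat
    proof (induction k)
      case (Suc k)
      from step[OF Suc nonneg[OF Suc]] show ?case
        by (simp add: add_divide_distrib algebra_simps)
    qed (use start in simp)
    obtain k :: nat where "N1 * N < k" using reals_Archimedean2 by blast
    hence "N1 - k / N < 0" using N(1) by (simp add: field_simps)
    with nonneg[OF descend[of k]] show False by simp
  qed
  then obtain \<epsilon> where "\<epsilon> \<in> E" "\<epsilon> < 0" by blast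
  thus ?thesis using that[of "- \<epsilon>"] by (simp add: E_def)
qed

theorem in_M_if_positive_characters:
  assumes h: "h \<in> A"
    and pos: "\<And>\<phi>. is_character \<phi> \<Longrightarrow> (\<And>m. m \<in> M \<Longrightarrow> \<phi> m \<ge> 0) \<Longrightarrow> \<phi> h > 0"
  shows "h \<in> M"
proof -
  have "(\<lambda>z. -1) \<in> adjoin M_closure (\<lambda>z. - h z)"
  proof (rule ccontr)
    assume "(\<lambda>z. -1) \<notin> adjoin M_closure (\<lambda>z. - h z)"
    note P = is_preordering_adjoin[OF is_preordering_M_closure A_uminus[OF h] this]
    obtain \<phi> where \<phi>: "is_character \<phi>" "\<And>p. p \<in> adjoin M_closure (\<lambda>z. - h z) \<Longrightarrow> \<phi> p \<ge> 0"
      using exists_character_nonneg[OF P(1)] P(2) M_subset_M_closure by blast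
    from \<phi>(1) have "\<forall>a\<in>A. \<forall>b\<in>A. \<phi> (\<lambda>z. a z + b z) = \<phi> a + \<phi> b" "\<forall>c. \<phi> (\<lambda>z. c) = c"
      unfolding is_character_def by auto
    from this(1)[rule_format, OF h A_uminus[OF h]] this(2)[rule_format, of 0]
    have "\<phi> h + \<phi> (\<lambda>z. - h z) = 0" by simp
    moreover have "\<phi> (\<lambda>z. - h z) \<ge> 0" using \<phi>(2) P(3) by blast
    moreover have "\<phi> h > 0" using pos \<phi> P(2) M_subset_M_closure by blast
    ultimately show False by simp
  qed
  then obtain t1 t2 where t: "t1 \<in> M_closure" "t2 \<in> M_closure"
    and minus_one: "(\<lambda>z. -1) = (\<lambda>z. t1 z + - h z * t2 z)"
    unfolding adjoin_def by blast
  have "h z * t2 z = 1 + t1 z" for z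
    using fun_cong[OF minus_one, of z] by simp
  then obtain \<eta> where "\<eta> > 0" "(\<lambda>z. h z - \<eta>) \<in> M_closure"
    using M_closure_margin[OF h t] by blast
  hence "(\<lambda>z. h z - \<eta> + \<eta>) \<in> M" unfolding M_closure_def by blast
  thus ?thesis by simp
qed

end

section \<open>Polynomial functions\<close>

lemma monom_add: "monom (\<lambda>i. \<alpha> i + \<beta> i) x = monom \<alpha> x * monom \<beta> x"
  unfolding monom_def by (simp add: power_add prod.distrib)

lemma mono_deg_add: "mono_deg (\<lambda>i. \<alpha> i + \<beta> i) = mono_deg \<alpha> + mono_deg \<beta>"
  unfolding mono_deg_def by (simp add: sum.distrib)

lemma monom_zero [simp]: "monom (\<lambda>i. 0) x = 1"
  unfolding monom_def by simp

lemma mono_deg_zero [simp]: "mono_deg (\<lambda>i. 0) = 0"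
  unfolding mono_deg_def by simp

lemma monom_unit: "monom (\<lambda>j. if j = i then 1 else 0) x = x $ i"
  unfolding monom_def by (simp add: if_distrib[of "\<lambda>e. _ ^ e"] prod.delta cong: if_cong)

lemma mono_deg_unit: "mono_deg (\<lambda>j::'i::finite. if j = i then 1 else 0) = 1"
  unfolding mono_deg_def by (simp add: sum.delta)

lemma sum_collect_coefficients:
  fixes c :: "'a \<Rightarrow> real" and e :: "'a \<Rightarrow> 'b" and B :: "'b \<Rightarrow> 'x \<Rightarrow> real"
  assumes I: "finite I"
  shows "\<exists>d. finite {\<beta>. d \<beta> \<noteq> 0} \<and> {\<beta>. d \<beta> \<noteq> 0} \<subseteq> e ` I \<and>
    (\<forall>x. (\<Sum>i\<in>I. c i * B (e i) x) = (\<Sum>\<beta>\<in>{\<beta>. d \<beta> \<noteq> 0}. d \<beta> * B \<beta> x))"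
proof (intro exI conjI allI)
  define d where "d \<beta> = (\<Sum>i\<in>{i\<in>I. e i = \<beta>}. c i)" for \<beta>
  show sub: "{\<beta>. d \<beta> \<noteq> 0} \<subseteq> e ` I"
    unfolding d_def by (force intro: sum.neutral)
  thus "finite {\<beta>. d \<beta> \<noteq> 0}" using I finite_subset by blast
  fix x
  have "(\<Sum>i\<in>I. c i * B (e i) x) = (\<Sum>\<beta>\<in>e ` I. \<Sum>i\<in>{i\<in>I. e i = \<beta>}. c i * B (e i) x)"
    by (rule sum.image_gen[OF I])
  also have "\<dots> = (\<Sum>\<beta>\<in>e ` I. d \<beta> * B \<beta> x)"
    unfolding d_def sum_distrib_right by (intro sum.cong) auto
  also have "\<dots> = (\<Sum>\<beta>\<in>{\<beta>. d \<beta> \<noteq> 0}. d \<beta> * B \<beta> x)"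
    using I sub by (intro sum.mono_neutral_right) auto
  finally show "(\<Sum>i\<in>I. c i * B (e i) x) = (\<Sum>\<beta>\<in>{\<beta>. d \<beta> \<noteq> 0}. d \<beta> * B \<beta> x)" .
qed

lemma poly_leI:
  fixes e :: "'a \<Rightarrow> ('n::finite \<Rightarrow> nat)" and h :: "real^'n \<Rightarrow> real"
  assumes I: "finite I" and deg: "\<And>i. i \<in> I \<Longrightarrow> mono_deg (e i) \<le> k"
    and h: "\<And>x. h x = (\<Sum>i\<in>I. c i * monom (e i) x)"
  shows "poly_le k h"
proof -
  obtain d where "finite {\<beta>. d \<beta> \<noteq> 0}" "{\<beta>. d \<beta> \<noteq> 0} \<subseteq> e ` I"
    "\<And>x. (\<Sum>i\<in>I. c i * monom (e i) x) = (\<Sum>\<beta>\<in>{\<beta>. d \<beta> \<noteq> 0}. d \<beta> * monom \<beta> x)"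
    using sum_collect_coefficients[OF I, where c=c and e=e and B=monom] by blast
  thus ?thesis unfolding poly_le_def h using deg by blast
qed

lemma poly_leE:
  assumes "poly_le k h"
  obtains S c where "finite S" "\<And>\<alpha>. \<alpha> \<in> S \<Longrightarrow> mono_deg \<alpha> \<le> k"
    "\<And>x. h x = (\<Sum>\<alpha>\<in>S. c \<alpha> * monom \<alpha> x)"
  using assms unfolding poly_le_def by blast

lemma poly2_leI:
  fixes e :: "'a \<Rightarrow> ('n::finite \<Rightarrow> nat) \<times> ('p::finite \<Rightarrow> nat)" and h :: "real^'n \<Rightarrow> real^'p \<Rightarrow> real"
  assumes I: "finite I" and deg: "\<And>i. i \<in> I \<Longrightarrow> mono_deg (fst (e i)) + mono_deg (snd (e i)) \<le> k"
    and h: "\<And>x u. h x u = (\<Sum>i\<in>I. c i * monom (fst (e i)) x * monom (snd (e i)) u)"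
  shows "poly2_le k h"
proof -
  define B :: "('n \<Rightarrow> nat) \<times> ('p \<Rightarrow> nat) \<Rightarrow> (real^'n) \<times> (real^'p) \<Rightarrow> real"
    where "B \<gamma> xu = monom (fst \<gamma>) (fst xu) * monom (snd \<gamma>) (snd xu)" for \<gamma> xu
  from sum_collect_coefficients[OF I, where c=c and e=e and B=B]
  obtain d where d: "finite {\<gamma>. d \<gamma> \<noteq> 0}" "{\<gamma>. d \<gamma> \<noteq> 0} \<subseteq> e ` I"
    "\<forall>xu. (\<Sum>i\<in>I. c i * B (e i) xu) = (\<Sum>\<gamma>\<in>{\<gamma>. d \<gamma> \<noteq> 0}. d \<gamma> * B \<gamma> xu)"
    by (elim exE conjE)
  show ?thesis unfolding poly2_le_def
  proof (intro exI[of _ d] conjI allI impI)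
    show "finite {\<gamma>. d \<gamma> \<noteq> 0}" by (rule d(1))
    fix \<alpha> \<beta> assume "d (\<alpha>, \<beta>) \<noteq> 0"
    hence "(\<alpha>, \<beta>) \<in> e ` I" using subsetD[OF d(2)] by simp
    then obtain i where "i \<in> I" "(\<alpha>, \<beta>) = e i" by (rule imageE)
    thus "mono_deg \<alpha> + mono_deg \<beta> \<le> k" using deg[of i] by (metis fst_conv snd_conv)
  next
    fix x u
    show "h x u = (\<Sum>\<gamma>\<in>{\<gamma>. d \<gamma> \<noteq> 0}. d \<gamma> * monom (fst \<gamma>) x * monom (snd \<gamma>) u)"
      using d(3)[rule_format, of "(x, u)"] unfolding h B_def by (simp add: mult.assoc)
  qed
qed

lemma poly2_leE:
  assumes "poly2_le k h"
  obtains S c where "finite S" "\<And>\<gamma>. \<gamma> \<in> S \<Longrightarrow> mono_deg (fst \<gamma>) + mono_deg (snd \<gamma>) \<le> k"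
    "\<And>x u. h x u = (\<Sum>\<gamma>\<in>S. c \<gamma> * monom (fst \<gamma>) x * monom (snd \<gamma>) u)"
proof -
  from assms obtain c where c: "finite {\<gamma>. c \<gamma> \<noteq> 0}"
    "\<forall>\<alpha> \<beta>. c (\<alpha>, \<beta>) \<noteq> 0 \<longrightarrow> mono_deg \<alpha> + mono_deg \<beta> \<le> k"
    "\<forall>x u. h x u = (\<Sum>\<gamma>\<in>{\<gamma>. c \<gamma> \<noteq> 0}. c \<gamma> * monom (fst \<gamma>) x * monom (snd \<gamma>) u)"
    unfolding poly2_le_def by blast
  show ?thesis
    by (rule that[OF c(1)]) (use c(2,3) in \<open>auto split: prod.splits\<close>)
qed

lemma poly_le_mono: "poly_le k h \<Longrightarrow> k \<le> k' \<Longrightarrow> poly_le k' h"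
  unfolding poly_le_def by (meson order_trans)

lemma poly2_le_mono: "poly2_le k h \<Longrightarrow> k \<le> k' \<Longrightarrow> poly2_le k' h"
  unfolding poly2_le_def by (meson order_trans)

lemma poly2_le_const: "poly2_le 0 (\<lambda>x u. c)"
  by (rule poly2_leI[of "{()}" "\<lambda>_. (\<lambda>i. 0, \<lambda>i. 0)" _ _ "\<lambda>_. c"]) auto

lemma poly2_le_add:
  assumes "poly2_le k h1" "poly2_le k h2"
  shows "poly2_le k (\<lambda>x u. h1 x u + h2 x u)"
proof -
  obtain S1 c1 where 1: "finite S1" "\<And>\<gamma>. \<gamma> \<in> S1 \<Longrightarrow> mono_deg (fst \<gamma>) + mono_deg (snd \<gamma>) \<le> k"
    "\<And>x u. h1 x u = (\<Sum>\<gamma>\<in>S1. c1 \<gamma> * monom (fst \<gamma>) x * monom (snd \<gamma>) u)"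
    using poly2_leE[OF assms(1)] by blast
  obtain S2 c2 where 2: "finite S2" "\<And>\<gamma>. \<gamma> \<in> S2 \<Longrightarrow> mono_deg (fst \<gamma>) + mono_deg (snd \<gamma>) \<le> k"
    "\<And>x u. h2 x u = (\<Sum>\<gamma>\<in>S2. c2 \<gamma> * monom (fst \<gamma>) x * monom (snd \<gamma>) u)"
    using poly2_leE[OF assms(2)] by blast
  show ?thesis
    by (rule poly2_leI[of "S1 <+> S2" "case_sum id id" _ _ "case_sum c1 c2"])
       (use 1 2 in \<open>auto simp: sum.Plus\<close>)
qed

lemma poly2_le_mult:
  fixes h1 h2 :: "real^'n::finite \<Rightarrow> real^'p::finite \<Rightarrow> real"
  assumes "poly2_le k1 h1" "poly2_le k2 h2"
  shows "poly2_le (k1 + k2) (\<lambda>x u. h1 x u * h2 x u)"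
proof -
  obtain S1 c1 where 1: "finite S1" "\<And>\<gamma>. \<gamma> \<in> S1 \<Longrightarrow> mono_deg (fst \<gamma>) + mono_deg (snd \<gamma>) \<le> k1"
    "\<And>x u. h1 x u = (\<Sum>\<gamma>\<in>S1. c1 \<gamma> * monom (fst \<gamma>) x * monom (snd \<gamma>) u)"
    using poly2_leE[OF assms(1)] by blast
  obtain S2 c2 where 2: "finite S2" "\<And>\<gamma>. \<gamma> \<in> S2 \<Longrightarrow> mono_deg (fst \<gamma>) + mono_deg (snd \<gamma>) \<le> k2"
    "\<And>x u. h2 x u = (\<Sum>\<gamma>\<in>S2. c2 \<gamma> * monom (fst \<gamma>) x * monom (snd \<gamma>) u)"
    using poly2_leE[OF assms(2)] by blast
  define e :: "(('n \<Rightarrow> nat) \<times> ('p \<Rightarrow> nat)) \<times> ('n \<Rightarrow> nat) \<times> ('p \<Rightarrow> nat) \<Rightarrow> _"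
    where "e = (\<lambda>(\<gamma>, \<delta>). ((\<lambda>i. fst \<gamma> i + fst \<delta> i), (\<lambda>j. snd \<gamma> j + snd \<delta> j)))"
  show ?thesis
  proof (rule poly2_leI[of "S1 \<times> S2" e _ _ "\<lambda>(\<gamma>, \<delta>). c1 \<gamma> * c2 \<delta>"])
    show "finite (S1 \<times> S2)" using 1(1) 2(1) by simp
    show "mono_deg (fst (e i)) + mono_deg (snd (e i)) \<le> k1 + k2" if "i \<in> S1 \<times> S2" for i
      using that 1(2) 2(2) by (force simp: e_def mono_deg_add)
    fix x u
    have "h1 x u * h2 x u = (\<Sum>(\<gamma>, \<delta>)\<in>S1 \<times> S2.
        (c1 \<gamma> * monom (fst \<gamma>) x * monom (snd \<gamma>) u) * (c2 \<delta> * monom (fst \<delta>) x * monom (snd \<delta>) u))"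
      unfolding 1(3) 2(3) sum_product sum.cartesian_product ..
    also have "\<dots> = (\<Sum>i\<in>S1 \<times> S2. (\<lambda>(\<gamma>, \<delta>). c1 \<gamma> * c2 \<delta>) i * monom (fst (e i)) x * monom (snd (e i)) u)"
      by (rule sum.cong) (auto simp: e_def monom_add)
    finally show "h1 x u * h2 x u = \<dots>" .
  qed
qed

lemma poly2_le_x_coord: "poly2_le 1 (\<lambda>x u. x $ i)"
  by (rule poly2_leI[of "{()}" "\<lambda>_. (\<lambda>j. if j = i then 1 else 0, \<lambda>j. 0)" _ _ "\<lambda>_. 1"])
     (auto simp: monom_unit mono_deg_unit)

lemma poly2_le_u_coord: "poly2_le 1 (\<lambda>x u. u $ i)"
  by (rule poly2_leI[of "{()}" "\<lambda>_. (\<lambda>j. 0, \<lambda>j. if j = i then 1 else 0)" _ _ "\<lambda>_. 1"])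
     (auto simp: monom_unit mono_deg_unit)

lemma poly_le_iff_poly2_le: "poly_le k g \<longleftrightarrow> poly2_le k (\<lambda>x (u::real^'p::finite). g x)"
proof
  assume "poly_le k g"
  then obtain S c where "finite S" "\<And>\<alpha>. \<alpha> \<in> S \<Longrightarrow> mono_deg \<alpha> \<le> k"
    "\<And>x. g x = (\<Sum>\<alpha>\<in>S. c \<alpha> * monom \<alpha> x)"
    using poly_leE by blast
  thus "poly2_le k (\<lambda>x u. g x)"
    by (intro poly2_leI[of S "\<lambda>\<alpha>. (\<alpha>, \<lambda>j. 0)" _ _ c]) auto
next
  assume "poly2_le k (\<lambda>x (u::real^'p). g x)"
  then obtain S c where S: "finite S" "\<And>\<gamma>. \<gamma> \<in> S \<Longrightarrow> mono_deg (fst \<gamma>) + mono_deg (snd \<gamma>) \<le> k"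
    "\<And>x u. g x = (\<Sum>\<gamma>\<in>S. c \<gamma> * monom (fst \<gamma>) x * monom (snd \<gamma>) (u::real^'p))"
    using poly2_leE by blast
  show "poly_le k g"
  proof (rule poly_leI[OF S(1), of fst])
    show "mono_deg (fst \<gamma>) \<le> k" if "\<gamma> \<in> S" for \<gamma> using S(2)[OF that] by simp
    show "g x = (\<Sum>\<gamma>\<in>S. (c \<gamma> * monom (snd \<gamma>) (0::real^'p)) * monom (fst \<gamma>) x)" for x
      unfolding S(3)[of x 0] by (simp add: algebra_simps)
  qed
qed

lemma poly2_le_lift_u:
  assumes "poly_le k g" shows "poly2_le k (\<lambda>(x::real^'n::finite) u. g u)"
proof -
  obtain S c where "finite S" "\<And>\<beta>. \<beta> \<in> S \<Longrightarrow> mono_deg \<beta> \<le> k"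
    "\<And>u. g u = (\<Sum>\<beta>\<in>S. c \<beta> * monom \<beta> u)"
    using poly_leE[OF assms] by blast
  thus ?thesis by (intro poly2_leI[of S "\<lambda>\<beta>. (\<lambda>i. 0, \<beta>)" _ _ c]) auto
qed

lemma is_poly2_const: "is_poly2 (\<lambda>x u. c)"
  unfolding is_poly2_def using poly2_le_const by blast

lemma is_poly2_add: "is_poly2 a \<Longrightarrow> is_poly2 b \<Longrightarrow> is_poly2 (\<lambda>x u. a x u + b x u)"
  unfolding is_poly2_def
proof (elim exE)
  fix k1 k2 assume "poly2_le k1 a" "poly2_le k2 b"
  hence "poly2_le (k1 + k2) a" "poly2_le (k1 + k2) b"
    using poly2_le_mono le_add1 le_add2 by blast+
  thus "\<exists>k. poly2_le k (\<lambda>x u. a x u + b x u)" using poly2_le_add by blast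
qed

lemma is_poly2_mult: "is_poly2 a \<Longrightarrow> is_poly2 b \<Longrightarrow> is_poly2 (\<lambda>x u. a x u * b x u)"
  unfolding is_poly2_def using poly2_le_mult by blast

lemma is_poly2_sum:
  "finite S \<Longrightarrow> (\<And>l. l \<in> S \<Longrightarrow> is_poly2 (f l)) \<Longrightarrow> is_poly2 (\<lambda>x u. \<Sum>l\<in>S. f l x u)"
  by (induction S rule: finite_induct) (auto intro: is_poly2_add is_poly2_const[of 0, simplified])

lemma is_poly2_lift_x: "is_poly g \<Longrightarrow> is_poly2 (\<lambda>x (u::real^'p::finite). g x)"
  using poly_le_iff_poly2_le unfolding is_poly_def is_poly2_def by blast

lemma is_poly2_lift_u: "is_poly g \<Longrightarrow> is_poly2 (\<lambda>(x::real^'n::finite) u. g u)"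
  unfolding is_poly_def is_poly2_def using poly2_le_lift_u by blast

lemma closed_under_sum:
  assumes "\<And>a b. a \<in> B \<Longrightarrow> b \<in> B \<Longrightarrow> (\<lambda>z. a z + b z) \<in> B" "(\<lambda>z. 0) \<in> B"
  shows "finite S \<Longrightarrow> (\<And>i. i \<in> S \<Longrightarrow> f i \<in> B) \<Longrightarrow> (\<lambda>z. \<Sum>i\<in>S. f i z) \<in> B"
proof (induction S rule: finite_induct)
  case (insert i S) thus ?case using assms(1)[of "f i" "\<lambda>z. \<Sum>i\<in>S. f i z"] by simp
qed (use assms(2) in simp)

lemma closed_under_prod:
  assumes "\<And>a b. a \<in> B \<Longrightarrow> b \<in> B \<Longrightarrow> (\<lambda>z. a z * b z) \<in> B" "(\<lambda>z. 1) \<in> B"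
  shows "finite S \<Longrightarrow> (\<And>i. i \<in> S \<Longrightarrow> f i \<in> B) \<Longrightarrow> (\<lambda>z. \<Prod>i\<in>S. f i z) \<in> B"
proof (induction S rule: finite_induct)
  case (insert i S) thus ?case using assms(1)[of "f i" "\<lambda>z. \<Prod>i\<in>S. f i z"] by simp
qed (use assms(2) in simp)

lemma poly2_in_function_algebra:
  fixes B :: "((real^'n::finite) \<times> (real^'p::finite) \<Rightarrow> real) set"
  assumes const: "\<And>c. (\<lambda>z. c) \<in> B"
    and add: "\<And>a b. a \<in> B \<Longrightarrow> b \<in> B \<Longrightarrow> (\<lambda>z. a z + b z) \<in> B"
    and mult: "\<And>a b. a \<in> B \<Longrightarrow> b \<in> B \<Longrightarrow> (\<lambda>z. a z * b z) \<in> B"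
    and x: "\<And>i. (\<lambda>z. fst z $ i) \<in> B" and u: "\<And>j. (\<lambda>z. snd z $ j) \<in> B"
    and h: "is_poly2 h"
  shows "(\<lambda>z. h (fst z) (snd z)) \<in> B"
proof -
  obtain k where "poly2_le k h" using h unfolding is_poly2_def by blast
  then obtain S c where S: "finite S" "\<And>\<gamma>. \<gamma> \<in> S \<Longrightarrow> mono_deg (fst \<gamma>) + mono_deg (snd \<gamma>) \<le> k"
    and h_eq: "\<And>x u. h x u = (\<Sum>\<gamma>\<in>S. c \<gamma> * monom (fst \<gamma>) x * monom (snd \<gamma>) u)"
    using poly2_leE by blast
  have power: "(\<lambda>z. a z ^ n) \<in> B" if a: "a \<in> B" for a n
  proof -
    have "(\<lambda>z. \<Prod>i\<in>{..<n}. a z) \<in> B" by (rule closed_under_prod[OF mult const]) (use a in auto)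
    thus ?thesis by simp
  qed
  have "(\<lambda>z. monom \<alpha> (fst z)) \<in> B" for \<alpha>
    unfolding monom_def by (rule closed_under_prod[OF mult const]) (simp_all add: power x)
  moreover have "(\<lambda>z. monom \<beta> (snd z)) \<in> B" for \<beta>
    unfolding monom_def by (rule closed_under_prod[OF mult const]) (simp_all add: power u)
  ultimately show ?thesis
    unfolding h_eq by (intro closed_under_sum[OF add const S(1)] mult const)
qed

lemma continuous_on_poly2:
  fixes f :: "real^'n::finite \<Rightarrow> real^'p::finite \<Rightarrow> real"
  assumes "is_poly2 f" shows "continuous_on UNIV (\<lambda>z. f (fst z) (snd z))"
proof -
  have "(\<lambda>z. f (fst z) (snd z)) \<in> {h. continuous_on UNIV h}"
    by (rule poly2_in_function_algebra[OF _ _ _ _ _ assms]) (auto intro!: continuous_intros)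
  thus ?thesis by simp
qed

lemma continuous_on_poly:
  fixes p :: "real^'n::finite \<Rightarrow> real"
  assumes "poly_le k p" shows "continuous_on UNIV p"
proof -
  have "continuous_on UNIV (\<lambda>z::(real^'n) \<times> (real^'n). p (fst z))"
    using continuous_on_poly2[of "\<lambda>x u. p x"] assms poly_le_iff_poly2_le is_poly2_def by fastforce
  hence "continuous_on UNIV ((\<lambda>z::(real^'n) \<times> (real^'n). p (fst z)) \<circ> (\<lambda>x. (x, 0)))"
    by (intro continuous_on_compose continuous_intros) (erule continuous_on_subset, simp)
  thus ?thesis by (simp add: comp_def)
qed

lemma poly_le_if_real_polynomial_function:
  fixes g :: "real^'n::finite \<Rightarrow> real"
  assumes "real_polynomial_function g" shows "\<exists>k. poly_le k g"
  unfolding poly_le_iff_poly2_le[where 'p='n]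
  using assms
proof (induction rule: real_polynomial_function.induct)
  case (linear f)
  have f_eq: "f x = (\<Sum>i\<in>UNIV. f (axis i 1) * x $ i)" for x
  proof -
    have "f x = f (\<Sum>i\<in>UNIV. (x $ i) *\<^sub>R axis i 1)"
      using basis_expansion[of x] by (simp add: scalar_mult_eq_scaleR)
    also have "\<dots> = (\<Sum>i\<in>UNIV. (x $ i) * f (axis i 1))"
      using bounded_linear.linear[OF linear] by (simp add: linear_sum linear_scale)
    finally show ?thesis by (simp add: mult.commute)
  qed
  have "is_poly2 (\<lambda>x (u::real^'n). \<Sum>i\<in>UNIV. f (axis i 1) * x $ i)"
  proof (rule is_poly2_sum[OF finite_class.finite_UNIV])
    fix i :: 'n
    have "is_poly2 (\<lambda>x (u::real^'n). x $ i)" using poly2_le_x_coord unfolding is_poly2_def by blast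
    thus "is_poly2 (\<lambda>x (u::real^'n). f (axis i 1) * x $ i)" by (rule is_poly2_mult[OF is_poly2_const])
  qed
  moreover have "(\<lambda>x (u::real^'n). f x) = (\<lambda>x u. \<Sum>i\<in>UNIV. f (axis i 1) * x $ i)"
    by (intro ext f_eq)
  ultimately show ?case unfolding is_poly2_def by simp
next
  case (const c) thus ?case using poly2_le_const by blast
next
  case (add f g) thus ?case using is_poly2_add unfolding is_poly2_def by blast
next
  case (mult f g) thus ?case using is_poly2_mult unfolding is_poly2_def by blast
qed

section \<open>Sums of squares and the quadratic module\<close>

lemma sos2_le_mono: "sos2_le k s \<Longrightarrow> k \<le> k' \<Longrightarrow> sos2_le k' s"
  unfolding sos2_le_def by (meson poly2_le_mono)

lemma sos2_le_zero: "sos2_le k (\<lambda>x u. 0)"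
  unfolding sos2_le_def by (rule exI[of _ "[]"]) simp

lemma sos2_le_sq: "poly2_le k q \<Longrightarrow> sos2_le k (\<lambda>x u. (q x u)^2)"
  unfolding sos2_le_def by (rule exI[of _ "[q]"]) simp

lemma sos2_le_add: "sos2_le k s \<Longrightarrow> sos2_le k t \<Longrightarrow> sos2_le k (\<lambda>x u. s x u + t x u)"
proof -
  assume "sos2_le k s" "sos2_le k t"
  then obtain qs rs where "\<forall>q\<in>set qs. poly2_le k q" "\<forall>x u. s x u = (\<Sum>q\<leftarrow>qs. (q x u)^2)"
    "\<forall>q\<in>set rs. poly2_le k q" "\<forall>x u. t x u = (\<Sum>q\<leftarrow>rs. (q x u)^2)"
    unfolding sos2_le_def by blast
  thus ?thesis unfolding sos2_le_def by (intro exI[of _ "qs @ rs"]) auto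
qed

lemma sos2_le_sq_mult:
  assumes a: "poly2_le j a" and s: "sos2_le k s"
  shows "sos2_le (j + k) (\<lambda>x u. (a x u)^2 * s x u)"
proof -
  obtain qs where qs: "\<forall>q\<in>set qs. poly2_le k q" "\<forall>x u. s x u = (\<Sum>q\<leftarrow>qs. (q x u)^2)"
    using s unfolding sos2_le_def by blast
  have "(a x u)^2 * s x u = (\<Sum>q\<leftarrow>map (\<lambda>q x u. a x u * q x u) qs. (q x u)^2)" for x u
    unfolding qs(2)[rule_format] by (induction qs) (auto simp: power_mult_distrib algebra_simps)
  moreover have "\<forall>q\<in>set (map (\<lambda>q x u. a x u * q x u) qs). poly2_le (j + k) q"
    using qs(1) poly2_le_mult[OF a] by auto
  ultimately show ?thesis unfolding sos2_le_def by blast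
qed

lemma sos2_le_nonneg: "sos2_le k s \<Longrightarrow> s x u \<ge> 0"
  unfolding sos2_le_def by (auto intro!: sum_list_nonneg)

lemma sos2_le_poly2_le: "sos2_le k s \<Longrightarrow> poly2_le (2*k) s"
proof -
  assume "sos2_le k s"
  then obtain qs where qs: "\<forall>q\<in>set qs. poly2_le k q" "s = (\<lambda>x u. \<Sum>q\<leftarrow>qs. (q x u)^2)"
    unfolding sos2_le_def by (auto simp: fun_eq_iff)
  have "poly2_le (2*k) (\<lambda>x u. \<Sum>q\<leftarrow>qs. (q x u)^2)" using qs(1)
  proof (induction qs)
    case Nil
    then show ?case using poly2_le_mono[OF poly2_le_const[of 0]] by simp
  next
    case (Cons q qs)
    have "poly2_le (2*k) (\<lambda>x u. (q x u)^2)"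
      using poly2_le_mult[of k q k q] Cons.prems by (simp add: power2_eq_square mult_2)
    with Cons show ?case using poly2_le_add by auto
  qed
  thus ?thesis using qs(2) by simp
qed

lemma is_sos2_nonneg: "is_sos2 s \<Longrightarrow> s x u \<ge> 0"
  unfolding is_sos2_def using sos2_le_nonneg by blast

lemma is_sos2_is_poly2: "is_sos2 s \<Longrightarrow> is_poly2 s"
  unfolding is_sos2_def is_poly2_def using sos2_le_poly2_le by blast

lemma is_sos2_zero: "is_sos2 (\<lambda>x u. 0)"
  unfolding is_sos2_def using sos2_le_zero by blast

lemma is_sos2_one: "is_sos2 (\<lambda>x u. 1)"
  unfolding is_sos2_def using sos2_le_sq[OF poly2_le_const[of 1]] by auto

lemma is_sos2_add: "is_sos2 s \<Longrightarrow> is_sos2 t \<Longrightarrow> is_sos2 (\<lambda>x u. s x u + t x u)"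
  unfolding is_sos2_def
proof (elim exE)
  fix k1 k2 assume "sos2_le k1 s" "sos2_le k2 t"
  hence "sos2_le (k1 + k2) s" "sos2_le (k1 + k2) t"
    using sos2_le_mono le_add1 le_add2 by blast+
  thus "\<exists>k. sos2_le k (\<lambda>x u. s x u + t x u)" using sos2_le_add by blast
qed

lemma is_sos2_sq_mult: "is_poly2 a \<Longrightarrow> is_sos2 s \<Longrightarrow> is_sos2 (\<lambda>x u. (a x u)^2 * s x u)"
  unfolding is_sos2_def is_poly2_def using sos2_le_sq_mult by blast

lemma qmoduleI:
  assumes "is_sos2 s0" "\<forall>l<m1. is_sos2 (s1 l)" "\<forall>l<m2. is_sos2 (s2 l)"
    "\<And>x u. h x u = s0 x u + (\<Sum>l<m1. s1 l x u * g1 l x) + (\<Sum>l<m2. s2 l x u * g2 l u)"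
  shows "h \<in> qmodule g1 m1 g2 m2"
  unfolding qmodule_def using assms by blast

lemma qmoduleE:
  assumes "h \<in> qmodule g1 m1 g2 m2"
  obtains s0 s1 s2 where "is_sos2 s0" "\<forall>l<m1. is_sos2 (s1 l)" "\<forall>l<m2. is_sos2 (s2 l)"
    "\<And>x u. h x u = s0 x u + (\<Sum>l<m1. s1 l x u * g1 l x) + (\<Sum>l<m2. s2 l x u * g2 l u)"
  using assms unfolding qmodule_def by blast

lemma qmodule_add:
  assumes a: "a \<in> qmodule g1 m1 g2 m2" and b: "b \<in> qmodule g1 m1 g2 m2"
  shows "(\<lambda>x u. a x u + b x u) \<in> qmodule g1 m1 g2 m2"
proof -
  obtain s0 s1 s2 where s: "is_sos2 s0" "\<forall>l<m1. is_sos2 (s1 l)" "\<forall>l<m2. is_sos2 (s2 l)"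
    "\<And>x u. a x u = s0 x u + (\<Sum>l<m1. s1 l x u * g1 l x) + (\<Sum>l<m2. s2 l x u * g2 l u)"
    using qmoduleE[OF a] by blast
  obtain t0 t1 t2 where t: "is_sos2 t0" "\<forall>l<m1. is_sos2 (t1 l)" "\<forall>l<m2. is_sos2 (t2 l)"
    "\<And>x u. b x u = t0 x u + (\<Sum>l<m1. t1 l x u * g1 l x) + (\<Sum>l<m2. t2 l x u * g2 l u)"
    using qmoduleE[OF b] by blast
  show ?thesis
    by (rule qmoduleI[of "\<lambda>x u. s0 x u + t0 x u" _ "\<lambda>l x u. s1 l x u + t1 l x u" _ "\<lambda>l x u. s2 l x u + t2 l x u"])
       (use s t in \<open>auto intro: is_sos2_add simp: distrib_right sum.distrib\<close>)
qed

lemma qmodule_sq_mult: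
  assumes p: "is_poly2 p" and a: "a \<in> qmodule g1 m1 g2 m2"
  shows "(\<lambda>x u. (p x u)^2 * a x u) \<in> qmodule g1 m1 g2 m2"
proof -
  obtain s0 s1 s2 where s: "is_sos2 s0" "\<forall>l<m1. is_sos2 (s1 l)" "\<forall>l<m2. is_sos2 (s2 l)"
    "\<And>x u. a x u = s0 x u + (\<Sum>l<m1. s1 l x u * g1 l x) + (\<Sum>l<m2. s2 l x u * g2 l u)"
    using qmoduleE[OF a] by blast
  show ?thesis
    by (rule qmoduleI[of "\<lambda>x u. (p x u)^2 * s0 x u" _ "\<lambda>l x u. (p x u)^2 * s1 l x u" _
          "\<lambda>l x u. (p x u)^2 * s2 l x u"])
       (use s is_sos2_sq_mult[OF p] in \<open>auto simp: distrib_left sum_distrib_left mult.assoc\<close>)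
qed

lemma sos_in_qmodule: "is_sos2 s \<Longrightarrow> s \<in> qmodule g1 m1 g2 m2"
  by (rule qmoduleI[of s _ "\<lambda>l x u. 0" _ "\<lambda>l x u. 0"]) (auto intro: is_sos2_zero)

lemma generator_x_in_qmodule:
  assumes "l < m" shows "(\<lambda>x u. a l x) \<in> qmodule a m b k"
  by (rule qmoduleI[of "\<lambda>x u. 0" _ "\<lambda>l' x u. if l' = l then 1 else 0" _ "\<lambda>l x u. 0"])
     (use assms in \<open>auto intro: is_sos2_zero is_sos2_one simp: if_distrib[of "\<lambda>c. c * _"] sum.delta cong: if_cong\<close>)

lemma generator_u_in_qmodule:
  assumes "l < m" shows "(\<lambda>x u. b l u) \<in> qmodule a k b m"
  by (rule qmoduleI[of "\<lambda>x u. 0" _ "\<lambda>l x u. 0" _ "\<lambda>l' x u. if l' = l then 1 else 0"])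
     (use assms in \<open>auto intro: is_sos2_zero is_sos2_one simp: if_distrib[of "\<lambda>c. c * _"] sum.delta cong: if_cong\<close>)

lemma qmodule_nonneg:
  assumes h: "h \<in> qmodule g1 m1 g2 m2" and x: "x \<in> semialg g1 m1" and u: "u \<in> semialg g2 m2"
  shows "h x u \<ge> 0"
proof -
  obtain s0 s1 s2 where s: "is_sos2 s0" "\<forall>l<m1. is_sos2 (s1 l)" "\<forall>l<m2. is_sos2 (s2 l)"
    "\<And>x u. h x u = s0 x u + (\<Sum>l<m1. s1 l x u * g1 l x) + (\<Sum>l<m2. s2 l x u * g2 l u)"
    using qmoduleE[OF h] by blast
  have "0 \<le> (\<Sum>l<m1. s1 l x u * g1 l x)" "0 \<le> (\<Sum>l<m2. s2 l x u * g2 l u)"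
    using s(2,3) x u by (auto intro!: sum_nonneg mult_nonneg_nonneg intro: is_sos2_nonneg simp: semialg_def)
  thus ?thesis using s(4)[of x u] is_sos2_nonneg[OF s(1), of x u] by linarith
qed

lemma qmodule_is_poly2:
  assumes "\<forall>l<m1. is_poly (g1 l)" "\<forall>l<m2. is_poly (g2 l)" and h: "h \<in> qmodule g1 m1 g2 m2"
  shows "is_poly2 h"
proof -
  obtain s0 s1 s2 where s: "is_sos2 s0" "\<forall>l<m1. is_sos2 (s1 l)" "\<forall>l<m2. is_sos2 (s2 l)"
    "\<And>x u. h x u = s0 x u + (\<Sum>l<m1. s1 l x u * g1 l x) + (\<Sum>l<m2. s2 l x u * g2 l u)"
    using qmoduleE[OF h] by blast
  have "is_poly2 (\<lambda>x u. s0 x u + (\<Sum>l<m1. s1 l x u * g1 l x) + (\<Sum>l<m2. s2 l x u * g2 l u))"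
    using s(1-3) assms(1,2)
    by (intro is_poly2_add is_poly2_sum is_poly2_mult is_sos2_is_poly2 is_poly2_lift_x is_poly2_lift_u) auto
  moreover have "h = (\<lambda>x u. s0 x u + (\<Sum>l<m1. s1 l x u * g1 l x) + (\<Sum>l<m2. s2 l x u * g2 l u))"
    using s(4) by (auto simp: fun_eq_iff)
  ultimately show ?thesis by simp
qed

section \<open>Putinar's Positivstellensatz\<close>

lemma power2_norm_vec: "(norm (x::real^'i::finite))^2 = (\<Sum>i\<in>UNIV. (x $ i)^2)"
  unfolding power2_norm_eq_inner inner_vec_def by (simp add: power2_eq_square)

locale archimedean_semialgebraic =
  fixes g1 :: "nat \<Rightarrow> real^'n::finite \<Rightarrow> real" and m1 :: nat
    and g2 :: "nat \<Rightarrow> real^'p::finite \<Rightarrow> real" and m2 :: nat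
  assumes g1_poly: "\<forall>l<m1. is_poly (g1 l)" and g2_poly: "\<forall>l<m2. is_poly (g2 l)"
    and nonempty: "semialg g1 m1 \<times> semialg g2 m2 \<noteq> {}"
    and archimedean: "archimedean_qm g1 m1 g2 m2"
begin

definition PA :: "((real^'n) \<times> (real^'p) \<Rightarrow> real) set" where
  "PA = {h. is_poly2 (\<lambda>x u. h (x, u))}"

definition QM :: "((real^'n) \<times> (real^'p) \<Rightarrow> real) set" where
  "QM = {h. (\<lambda>x u. h (x, u)) \<in> qmodule g1 m1 g2 m2}"

lemma PA_const: "(\<lambda>z. c) \<in> PA"
  unfolding PA_def by (simp add: is_poly2_const)

lemma PA_add: "a \<in> PA \<Longrightarrow> b \<in> PA \<Longrightarrow> (\<lambda>z. a z + b z) \<in> PA"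
  unfolding PA_def using is_poly2_add by fastforce

lemma PA_mult: "a \<in> PA \<Longrightarrow> b \<in> PA \<Longrightarrow> (\<lambda>z. a z * b z) \<in> PA"
  unfolding PA_def using is_poly2_mult by fastforce

lemma PA_diff: "a \<in> PA \<Longrightarrow> b \<in> PA \<Longrightarrow> (\<lambda>z. a z - b z) \<in> PA"
  using PA_add[OF _ PA_mult[OF PA_const[of "-1"]], of a b] by simp

lemma PA_x: "(\<lambda>z. fst z $ i) \<in> PA"
  unfolding PA_def is_poly2_def using poly2_le_x_coord by auto

lemma PA_u: "(\<lambda>z. snd z $ i) \<in> PA"
  unfolding PA_def is_poly2_def using poly2_le_u_coord by auto

lemma QM_in_PA: "m \<in> QM \<Longrightarrow> m \<in> PA"
  unfolding QM_def PA_def using qmodule_is_poly2[OF g1_poly g2_poly] by blast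

lemma QM_add: "a \<in> QM \<Longrightarrow> b \<in> QM \<Longrightarrow> (\<lambda>z. a z + b z) \<in> QM"
  unfolding QM_def using qmodule_add by fastforce

lemma QM_sq_mult: "a \<in> PA \<Longrightarrow> m \<in> QM \<Longrightarrow> (\<lambda>z. (a z)^2 * m z) \<in> QM"
  unfolding QM_def PA_def using qmodule_sq_mult by fastforce

lemma QM_one: "(\<lambda>z. 1) \<in> QM"
  unfolding QM_def using sos_in_qmodule[OF is_sos2_one] by simp

lemma QM_proper: "(\<lambda>z. -1) \<notin> QM"
proof
  assume "(\<lambda>z. -1) \<in> QM"
  moreover obtain x u where "x \<in> semialg g1 m1" "u \<in> semialg g2 m2" using nonempty by auto
  ultimately show False using qmodule_nonneg[of "\<lambda>x u. -1"] by (force simp: QM_def)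
qed

lemma QM_sq: "a \<in> PA \<Longrightarrow> (\<lambda>z. (a z)^2) \<in> QM"
  using QM_sq_mult[OF _ QM_one] by simp

lemma QM_const: "c \<ge> 0 \<Longrightarrow> (\<lambda>z. c) \<in> QM"
  using QM_sq[OF PA_const[of "sqrt c"]] by simp

lemma QM_scale: "c \<ge> 0 \<Longrightarrow> m \<in> QM \<Longrightarrow> (\<lambda>z. c * m z) \<in> QM"
  using QM_sq_mult[OF PA_const[of "sqrt c"]] by simp

lemma QM_sum: "finite S \<Longrightarrow> (\<And>i. i \<in> S \<Longrightarrow> f i \<in> QM) \<Longrightarrow> (\<lambda>z. \<Sum>i\<in>S. f i z) \<in> QM"
  using closed_under_sum[of QM] QM_add QM_const[of 0] by blast

text \<open>The elements of \<open>PA\<close> whose square is bounded modulo \<open>QM\<close> form a subalgebra that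
  contains the coordinates (by the Archimedean hypothesis), hence all of \<open>PA\<close>.\<close>

definition bounded_PA :: "((real^'n) \<times> (real^'p) \<Rightarrow> real) set" where
  "bounded_PA = {a \<in> PA. \<exists>N. (\<lambda>z. N - (a z)^2) \<in> QM}"

lemma bounded_PA_const: "(\<lambda>z. c) \<in> bounded_PA"
  unfolding bounded_PA_def using PA_const QM_const[of 0] by (auto intro!: exI[of _ "c^2"])

lemma bounded_PA_add:
  assumes a: "a \<in> bounded_PA" and b: "b \<in> bounded_PA"
  shows "(\<lambda>z. a z + b z) \<in> bounded_PA"
proof -
  obtain Na Nb where ab: "a \<in> PA" "b \<in> PA"
    and Na: "(\<lambda>z. Na - (a z)^2) \<in> QM" and Nb: "(\<lambda>z. Nb - (b z)^2) \<in> QM"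
    using a b unfolding bounded_PA_def by blast
  have "(\<lambda>z. 2 * (Na - (a z)^2) + 2 * (Nb - (b z)^2) + (a z - b z)^2) \<in> QM"
    by (intro QM_add QM_scale Na Nb QM_sq PA_diff ab) auto
  moreover have "(\<lambda>z. 2 * (Na - (a z)^2) + 2 * (Nb - (b z)^2) + (a z - b z)^2)
      = (\<lambda>z. (2*Na + 2*Nb) - (a z + b z)^2)"
    by (auto simp: fun_eq_iff power2_eq_square algebra_simps)
  ultimately show ?thesis unfolding bounded_PA_def using PA_add[OF ab] by auto
qed

lemma bounded_PA_mult:
  assumes a: "a \<in> bounded_PA" and b: "b \<in> bounded_PA"
  shows "(\<lambda>z. a z * b z) \<in> bounded_PA"
proof -
  obtain Na Nb where ab: "a \<in> PA" "b \<in> PA"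
    and Na: "(\<lambda>z. Na - (a z)^2) \<in> QM" and Nb: "(\<lambda>z. Nb - (b z)^2) \<in> QM"
    using a b unfolding bounded_PA_def by blast
  define Nb' where "Nb' = max Nb 0"
  have Nb': "(\<lambda>z. Nb' - (b z)^2) \<in> QM"
    using QM_add[OF Nb QM_const[of "Nb' - Nb"]] by (simp add: Nb'_def)
  have "(\<lambda>z. Nb' * (Na - (a z)^2) + (a z)^2 * (Nb' - (b z)^2)) \<in> QM"
    by (rule QM_add[OF QM_scale[OF _ Na] QM_sq_mult[OF ab(1) Nb']]) (simp add: Nb'_def)
  moreover have "Nb' * (Na - (a z)^2) + (a z)^2 * (Nb' - (b z)^2) = Nb' * Na - (a z * b z)^2" for z
    by (simp add: power2_eq_square algebra_simps)
  ultimately show ?thesis unfolding bounded_PA_def using PA_mult[OF ab] by auto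
qed

lemma sum_squares_in_QM:
  "finite S \<Longrightarrow> (\<And>j. j \<in> S \<Longrightarrow> f j \<in> PA) \<Longrightarrow> (\<lambda>z. \<Sum>j\<in>S. (f j z)^2) \<in> QM"
  using QM_sum[of S "\<lambda>j z. (f j z)^2"] QM_sq by blast

lemma bounded_PA_if_le_norms:
  assumes a: "a \<in> PA" and le: "(\<lambda>z. (norm (fst z))^2 + (norm (snd z))^2 - (a z)^2) \<in> QM"
  shows "a \<in> bounded_PA"
proof -
  obtain R where "(\<lambda>x u. R - ((norm x)^2 + (norm u)^2)) \<in> qmodule g1 m1 g2 m2"
    using archimedean unfolding archimedean_qm_def by blast
  hence "(\<lambda>z. R - ((norm (fst z))^2 + (norm (snd z))^2)) \<in> QM" unfolding QM_def by simp
  from QM_add[OF this le] show ?thesis unfolding bounded_PA_def using a by auto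
qed

lemma bounded_PA_x: "(\<lambda>z. fst z $ i) \<in> bounded_PA"
proof (rule bounded_PA_if_le_norms[OF PA_x])
  have "(\<lambda>z. (\<Sum>j\<in>UNIV - {i}. (fst z $ j)^2) + (\<Sum>j\<in>UNIV. (snd z $ j)^2)) \<in> QM"
    by (intro QM_add sum_squares_in_QM PA_x PA_u) auto
  moreover have "(\<Sum>j\<in>UNIV. (x $ j)^2) = (x $ i)^2 + (\<Sum>j\<in>UNIV - {i}. (x $ j)^2)" for x :: "real^'n"
    by (simp add: sum.remove)
  ultimately show "(\<lambda>z. (norm (fst z))^2 + (norm (snd z))^2 - (fst z $ i)^2) \<in> QM"
    by (simp add: power2_norm_vec)
qed

lemma bounded_PA_u: "(\<lambda>z. snd z $ i) \<in> bounded_PA"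
proof (rule bounded_PA_if_le_norms[OF PA_u])
  have "(\<lambda>z. (\<Sum>j\<in>UNIV. (fst z $ j)^2) + (\<Sum>j\<in>UNIV - {i}. (snd z $ j)^2)) \<in> QM"
    by (intro QM_add sum_squares_in_QM PA_x PA_u) auto
  moreover have "(\<Sum>j\<in>UNIV. (u $ j)^2) = (u $ i)^2 + (\<Sum>j\<in>UNIV - {i}. (u $ j)^2)" for u :: "real^'p"
    by (simp add: sum.remove)
  ultimately show "(\<lambda>z. (norm (fst z))^2 + (norm (snd z))^2 - (snd z $ i)^2) \<in> QM"
    by (simp add: power2_norm_vec)
qed

lemma PA_subset_bounded_PA: "a \<in> PA \<Longrightarrow> a \<in> bounded_PA"
  using poly2_in_function_algebra[of bounded_PA "\<lambda>x u. a (x, u)"]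
    bounded_PA_const bounded_PA_add bounded_PA_mult bounded_PA_x bounded_PA_u
  by (simp add: PA_def)

text \<open>From \<open>N \<ge> a\<^sup>2\<close> one gets \<open>k - a = ((k - a)\<^sup>2 + (k\<^sup>2 - N) + (N - a\<^sup>2)) / 2k\<close> for
  large \<open>k\<close>.\<close>

lemma QM_archimedean:
  assumes a: "a \<in> PA" shows "\<exists>N. (\<lambda>z. N - a z) \<in> QM"
proof -
  obtain N where N: "(\<lambda>z. N - (a z)^2) \<in> QM"
    using PA_subset_bounded_PA[OF a] unfolding bounded_PA_def by blast
  define k where "k = \<bar>N\<bar> + 1"
  have k: "k > 0" "k^2 \<ge> N"
    unfolding k_def power2_eq_square by (auto intro: order_trans[OF _ mult_left_mono[of 1]])
  have "(\<lambda>z. (1/(2*k)) * ((k - a z)^2 + ((k^2 - N) + (N - (a z)^2)))) \<in> QM"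
    using k by (intro QM_scale QM_add QM_sq QM_const PA_diff PA_const a N) auto
  moreover have "(1/(2*k)) * ((k - a z)^2 + ((k^2 - N) + (N - (a z)^2))) = k - a z" for z
    using k by (simp add: power2_eq_square field_simps)
  ultimately show ?thesis by auto
qed

lemma archimedean_qmodule_QM: "archimedean_qmodule PA QM"
  by unfold_locales
    (use PA_const PA_add PA_mult QM_in_PA QM_add QM_sq_mult QM_one QM_archimedean QM_proper in auto)

interpretation QM: archimedean_qmodule PA QM
  by (rule archimedean_qmodule_QM)

lemma character_is_evaluation:
  assumes \<phi>: "QM.is_character \<phi>" and h: "is_poly2 h"
  shows "\<phi> (\<lambda>z. h (fst z) (snd z)) = h (\<chi> i. \<phi> (\<lambda>z. fst z $ i)) (\<chi> j. \<phi> (\<lambda>z. snd z $ j))"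
proof -
  define \<xi> where "\<xi> = ((\<chi> i. \<phi> (\<lambda>z. fst z $ i)), (\<chi> j. \<phi> (\<lambda>z. snd z $ j)))"
  have "(\<lambda>z. h (fst z) (snd z)) \<in> {a \<in> PA. \<phi> a = a \<xi>}"
    by (rule poly2_in_function_algebra[OF _ _ _ _ _ h])
       (use \<phi> PA_const PA_add PA_mult PA_x PA_u in \<open>auto simp: QM.is_character_def \<xi>_def\<close>)
  thus ?thesis by (simp add: \<xi>_def)
qed

theorem putinar_positivstellensatz:
  assumes h: "is_poly2 h"
    and pos: "\<And>x u. x \<in> semialg g1 m1 \<Longrightarrow> u \<in> semialg g2 m2 \<Longrightarrow> h x u > 0"
  shows "h \<in> qmodule g1 m1 g2 m2"
proof -
  have "(\<lambda>z. h (fst z) (snd z)) \<in> QM"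
  proof (rule QM.in_M_if_positive_characters)
    show "(\<lambda>z. h (fst z) (snd z)) \<in> PA" using h by (simp add: PA_def)
    fix \<phi> assume \<phi>: "QM.is_character \<phi>" and nonneg: "\<And>m. m \<in> QM \<Longrightarrow> \<phi> m \<ge> 0"
    define x where "x = (\<chi> i. \<phi> (\<lambda>z. fst z $ i))"
    define u where "u = (\<chi> j. \<phi> (\<lambda>z. snd z $ j))"
    have "x \<in> semialg g1 m1"
    proof -
      have "0 \<le> g1 l x" if l: "l < m1" for l
      proof -
        have "(\<lambda>z. g1 l (fst z)) \<in> QM"
          using generator_x_in_qmodule[where a=g1 and b=g2 and k=m2, OF l] by (simp add: QM_def)
        from nonneg[OF this] show ?thesis
          using character_is_evaluation[OF \<phi> is_poly2_lift_x[of "g1 l"]] g1_poly l by (simp add: x_def)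
      qed
      thus ?thesis by (simp add: semialg_def)
    qed
    moreover have "u \<in> semialg g2 m2"
    proof -
      have "0 \<le> g2 l u" if l: "l < m2" for l
      proof -
        have "(\<lambda>z. g2 l (snd z)) \<in> QM"
          using generator_u_in_qmodule[where a=g1 and b=g2 and k=m1, OF l] by (simp add: QM_def)
        from nonneg[OF this] show ?thesis
          using character_is_evaluation[OF \<phi> is_poly2_lift_u[of "g2 l"]] g2_poly l by (simp add: u_def)
      qed
      thus ?thesis by (simp add: semialg_def)
    qed
    ultimately show "\<phi> (\<lambda>z. h (fst z) (snd z)) > 0"
      using character_is_evaluation[OF \<phi> h] pos by (simp add: x_def u_def)
  qed
  thus ?thesis by (simp add: QM_def)
qed

end

section \<open>Convergence of the approximations\<close>

lemma LIMSEQ_zero_if_eventually_le: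
  fixes x :: "nat \<Rightarrow> real"
  assumes nonneg: "\<And>n. 0 \<le> x n" and small: "\<And>\<epsilon>. \<epsilon> > 0 \<Longrightarrow> eventually (\<lambda>n. x n \<le> \<epsilon>) sequentially"
  shows "x \<longlonglongrightarrow> 0"
proof (rule order_tendstoI)
  show "eventually (\<lambda>n. a < x n) sequentially" if "a < 0" for a
    using that by (intro always_eventually allI) (rule less_le_trans[OF _ nonneg])
  show "eventually (\<lambda>n. x n < a) sequentially" if "0 < a" for a
    using small[of "a/2"] that by (auto elim: eventually_mono)
qed

lemma continuous_on_INF:
  fixes f :: "'a::metric_space \<Rightarrow> 'b::metric_space \<Rightarrow> real"
  assumes uc: "uniformly_continuous_on (S \<times> K) (\<lambda>z. f (fst z) (snd z))" and K: "K \<noteq> {}"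
    and bdd: "\<And>x. x \<in> S \<Longrightarrow> bdd_below (f x ` K)"
  shows "continuous_on S (\<lambda>x. INF u\<in>K. f x u)"
  unfolding continuous_on_iff
proof (intro ballI allI impI)
  fix x e assume x: "x \<in> S" and e: "(e::real) > 0"
  obtain d where d: "d > 0" and close: "\<And>z z'. z \<in> S \<times> K \<Longrightarrow> z' \<in> S \<times> K \<Longrightarrow> dist z' z < d \<Longrightarrow>
      dist (f (fst z') (snd z')) (f (fst z) (snd z)) < e/2"
    using uc e unfolding uniformly_continuous_on_def by (metis half_gt_zero)
  show "\<exists>d>0. \<forall>x'\<in>S. dist x' x < d \<longrightarrow> dist (INF u\<in>K. f x' u) (INF u\<in>K. f x u) < e"
  proof (intro exI conjI ballI impI)
    fix x' assume x': "x' \<in> S" and dx: "dist x' x < d"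
    have near: "\<bar>f x' u - f x u\<bar> < e/2" if u: "u \<in> K" for u
      using close[of "(x, u)" "(x', u)"] x x' u dx by (simp add: dist_Pair_Pair dist_real_def)
    have "(INF u\<in>K. f y u) - e/2 \<le> (INF u\<in>K. f y' u)" if y: "y \<in> S"
      and yy': "\<And>u. u \<in> K \<Longrightarrow> \<bar>f y u - f y' u\<bar> < e/2" for y y'
    proof -
      have "(INF u\<in>K. f y u) - e/2 \<le> f y' u" if u: "u \<in> K" for u
        using cINF_lower[OF bdd[OF y] u] yy'[OF u] by linarith
      hence "(INF u\<in>K. f y u) - e/2 \<le> (INF u\<in>K. f y' u)" by (rule cINF_greatest[OF K])
      thus ?thesis .
    qed
    from this[OF x] this[OF x'] near show "dist (INF u\<in>K. f x' u) (INF u\<in>K. f x u) < e"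
      using e by (fastforce simp: dist_real_def abs_le_iff abs_minus_commute)
  qed (rule d)
qed

lemma set_integrable_continuous_compact:
  fixes g :: "'a::euclidean_space \<Rightarrow> real"
  shows "compact S \<Longrightarrow> continuous_on S g \<Longrightarrow> set_integrable lborel S g"
  unfolding set_integrable_def by (rule borel_integrable_compact)

lemma set_integral_abs_diff_tendsto_zero:
  fixes F :: "'a::euclidean_space \<Rightarrow> real" and p :: "nat \<Rightarrow> 'a \<Rightarrow> real"
  assumes S: "compact S" and F: "continuous_on S F"
    and below: "eventually (\<lambda>d. continuous_on S (p d) \<and> (\<forall>x\<in>S. p d x \<le> F x)) sequentially"
    and approx: "\<And>\<epsilon>. \<epsilon> > 0 \<Longrightarrow> \<exists>q. continuous_on S q \<and> (\<forall>x\<in>S. F x - \<epsilon> \<le> q x) \<and>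
        eventually (\<lambda>d. (LINT x:S|lborel. q x) \<le> (LINT x:S|lborel. p d x)) sequentially"
  shows "(\<lambda>d. LINT x:S|lborel. \<bar>F x - p d x\<bar>) \<longlonglongrightarrow> 0"
proof (rule LIMSEQ_zero_if_eventually_le)
  have S_sets: "S \<in> sets lborel" using S by (simp add: borel_compact)
  have S_finite: "emeasure lborel S \<noteq> \<infinity>"
    using fmeasurable_compact[OF S] by (auto simp: fmeasurable_def less_top)
  note integrable = set_integrable_continuous_compact[OF S]
  show "0 \<le> (LINT x:S|lborel. \<bar>F x - p d x\<bar>)" for d
    unfolding set_lebesgue_integral_def by (rule integral_nonneg_AE) (simp add: indicator_def)
  fix \<epsilon> :: real assume e: "\<epsilon> > 0"
  define \<mu> where "\<mu> = measure lborel S"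
  define \<epsilon>' where "\<epsilon>' = \<epsilon> / (\<mu> + 1)"
  have \<mu>: "\<mu> \<ge> 0" by (simp add: \<mu>_def)
  have e': "\<epsilon>' > 0" "\<epsilon>' * \<mu> \<le> \<epsilon>"
    using e \<mu> by (auto simp: \<epsilon>'_def field_simps)
  obtain q where q: "continuous_on S q" "\<forall>x\<in>S. F x - \<epsilon>' \<le> q x"
    and q_le: "eventually (\<lambda>d. (LINT x:S|lborel. q x) \<le> (LINT x:S|lborel. p d x)) sequentially"
    using approx[OF e'(1)] by blast
  from below q_le show "eventually (\<lambda>d. (LINT x:S|lborel. \<bar>F x - p d x\<bar>) \<le> \<epsilon>) sequentially"
  proof eventually_elim
    case (elim d)
    have "(LINT x:S|lborel. \<bar>F x - p d x\<bar>) = (LINT x:S|lborel. F x - p d x)"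
      using elim(1) by (intro set_lebesgue_integral_cong[OF S_sets]) auto
    also have "\<dots> = (LINT x:S|lborel. F x) - (LINT x:S|lborel. p d x)"
      using elim(1) by (intro set_integral_diff(2) integrable F) auto
    also have "\<dots> \<le> (LINT x:S|lborel. F x) - (LINT x:S|lborel. q x)"
      using elim(2) by simp
    also have "\<dots> = (LINT x:S|lborel. F x - q x)"
      by (intro set_integral_diff(2)[symmetric] integrable F q(1))
    also have "\<dots> \<le> (LINT x:S|lborel. \<epsilon>')"
      using q(2) by (intro set_integral_mono set_integral_diff(1) integrable F q(1)) auto
    also have "\<dots> = \<epsilon>' * \<mu>"
      using set_integral_const[OF S_sets S_finite, of \<epsilon>'] by (simp add: \<mu>_def)
    finally show ?case using e'(2) by linarith
  qed
qed

lemma closed_sublevel: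
  fixes g :: "'a::topological_space \<Rightarrow> 'b::topological_space"
  assumes "closed S" "continuous_on S g" "closed T"
  shows "closed {x\<in>S. g x \<in> T}"
proof -
  have "{x\<in>S. g x \<in> T} = S \<inter> g -` T" by auto
  thus ?thesis using continuous_closed_preimage[OF assms(2,1,3)] by simp
qed

lemma compact_sublevel:
  fixes g :: "'a::t2_space \<Rightarrow> 'b::topological_space"
  assumes "compact S" "continuous_on S g" "closed T"
  shows "compact {x\<in>S. g x \<in> T}"
proof -
  have "compact (S \<inter> {x\<in>S. g x \<in> T})"
    by (rule compact_Int_closed[OF assms(1) closed_sublevel[OF compact_imp_closed[OF assms(1)] assms(2,3)]])
  moreover have "S \<inter> {x\<in>S. g x \<in> T} = {x\<in>S. g x \<in> T}" by auto
  ultimately show ?thesis by simp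
qed

lemma measure_near_zero_set_tendsto:
  fixes F :: "'a::euclidean_space \<Rightarrow> real"
  assumes S: "compact S" and F: "continuous_on S F" and null: "emeasure lborel {x\<in>S. F x = 0} = 0"
  shows "(\<lambda>n. measure lborel {x\<in>S. F x \<in> {0..1 / Suc n}}) \<longlonglongrightarrow> 0"
proof -
  define B where "B n = {x\<in>S. F x \<in> {0..1 / Suc n}}" for n
  have B_compact: "compact (B n)" for n
    unfolding B_def using S F by (intro compact_sublevel) auto
  have "(\<lambda>n. measure lborel (B n)) \<longlonglongrightarrow> measure lborel (\<Inter>n. B n)"
  proof (rule Lim_measure_decseq)
    show "range B \<subseteq> sets lborel" using B_compact by (simp add: borel_compact image_subset_iff)
    show "decseq B"
    proof (rule decseq_SucI)
      show "B (Suc n) \<subseteq> B n" for n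
        using order_trans[OF _ divide_left_mono[of "real (Suc n)" "real (Suc (Suc n))" 1]]
        by (auto simp: B_def)
    qed
    show "emeasure lborel (B n) \<noteq> \<infinity>" for n
      using fmeasurable_compact[OF B_compact] by (auto simp: fmeasurable_def less_top)
  qed
  moreover have "(\<Inter>n. B n) = {x\<in>S. F x = 0}"
  proof (intro equalityI subsetI)
    fix x assume "x \<in> (\<Inter>n. B n)"
    hence "x \<in> B n" for n by blast
    hence x: "x \<in> S" "0 \<le> F x" "F x \<le> 1 / Suc n" for n by (simp_all add: B_def)
    have "F x \<le> 0"
    proof (rule ccontr)
      assume "\<not> F x \<le> 0"
      then obtain n where "inverse (real (Suc n)) < F x" using reals_Archimedean[of "F x"] by auto
      thus False using x(3)[of n] by (simp add: divide_inverse)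
    qed
    thus "x \<in> {x\<in>S. F x = 0}" using x(1,2) by simp
  next
    fix x assume "x \<in> {x\<in>S. F x = 0}"
    thus "x \<in> (\<Inter>n. B n)" by (simp add: B_def)
  qed
  moreover have "measure lborel {x\<in>S. F x = 0} = 0" using null by (simp add: measure_def)
  ultimately show ?thesis by (simp add: B_def)
qed

text \<open>A point where \<open>F \<ge> 0 > p\<close> either has \<open>F \<le> \<delta>\<close> or \<open>|F - p| \<ge> \<delta>\<close>; the latter set is
  controlled by Markov's inequality.\<close>

lemma measure_sign_change_le:
  fixes F p :: "'a::euclidean_space \<Rightarrow> real"
  assumes S: "compact S" and F: "continuous_on S F" and p: "continuous_on S p" and \<delta>: "\<delta> > 0"
  shows "measure lborel ({x\<in>S. 0 \<le> F x} - {x\<in>S. 0 \<le> p x})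
    \<le> measure lborel {x\<in>S. F x \<in> {0..\<delta>}} + (LINT x:S|lborel. \<bar>F x - p x\<bar>) / \<delta>"
proof -
  have abs_cont: "continuous_on S (\<lambda>x. \<bar>F x - p x\<bar>)" by (intro continuous_intros F p)
  define B where "B = {x\<in>S. F x \<in> {0..\<delta>}}"
  define C where "C = {x\<in>S. \<bar>F x - p x\<bar> \<in> {\<delta>..}}"
  have B: "B \<in> fmeasurable lborel"
    unfolding B_def by (intro fmeasurable_compact compact_sublevel S F closed_atLeastAtMost)
  have C: "C \<in> fmeasurable lborel"
    unfolding C_def by (intro fmeasurable_compact compact_sublevel S abs_cont closed_atLeast)
  have "closed {x\<in>S. F x \<in> {0..}}" "closed {x\<in>S. p x \<in> {0..}}"
    using closed_sublevel[OF compact_imp_closed[OF S] _ closed_atLeast] F p by blast+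
  hence "{x\<in>S. 0 \<le> F x} - {x\<in>S. 0 \<le> p x} \<in> sets lborel" by auto
  moreover have "{x\<in>S. 0 \<le> F x} - {x\<in>S. 0 \<le> p x} \<subseteq> B \<union> C"
    by (auto simp: B_def C_def)
  ultimately have "measure lborel ({x\<in>S. 0 \<le> F x} - {x\<in>S. 0 \<le> p x}) \<le> measure lborel (B \<union> C)"
    by (intro measure_mono_fmeasurable fmeasurable.Un B C)
  also have "\<dots> \<le> measure lborel B + measure lborel C"
    using B C by (intro measure_Un_le) auto
  also have "measure lborel C \<le> (LINT x:S|lborel. \<bar>F x - p x\<bar>) / \<delta>"
    unfolding C_def atLeast_iff mem_Collect_eq
    using S \<delta> set_integrable_continuous_compact[OF S abs_cont]
    by (intro integral_Markov_inequality'_measure) (auto simp: borel_compact)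
  finally show ?thesis by (simp add: B_def)
qed

lemma measure_sign_change_tendsto_zero:
  fixes F :: "'a::euclidean_space \<Rightarrow> real" and p :: "nat \<Rightarrow> 'a \<Rightarrow> real"
  assumes S: "compact S" and F: "continuous_on S F" and null: "emeasure lborel {x\<in>S. F x = 0} = 0"
    and p: "eventually (\<lambda>d. continuous_on S (p d)) sequentially"
    and L1: "(\<lambda>d. LINT x:S|lborel. \<bar>F x - p d x\<bar>) \<longlonglongrightarrow> 0"
  shows "(\<lambda>d. measure lborel ({x\<in>S. 0 \<le> F x} - {x\<in>S. 0 \<le> p d x})) \<longlonglongrightarrow> 0"
proof (rule LIMSEQ_zero_if_eventually_le[OF measure_nonneg])
  fix \<epsilon> :: real assume e: "\<epsilon> > 0"
  obtain n where n: "measure lborel {x\<in>S. F x \<in> {0..1 / Suc n}} < \<epsilon>/2"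
    using order_tendstoD(2)[OF measure_near_zero_set_tendsto[OF S F null], of "\<epsilon>/2"] e
    by (auto simp: eventually_sequentially)
  define \<delta> :: real where "\<delta> = 1 / Suc n"
  have \<delta>: "\<delta> > 0" by (simp add: \<delta>_def)
  have "eventually (\<lambda>d. (LINT x:S|lborel. \<bar>F x - p d x\<bar>) < \<delta> * (\<epsilon>/2)) sequentially"
    by (rule order_tendstoD(2)[OF L1]) (use \<delta> e in simp)
  with p show "eventually (\<lambda>d. measure lborel ({x\<in>S. 0 \<le> F x} - {x\<in>S. 0 \<le> p d x}) \<le> \<epsilon>) sequentially"
  proof eventually_elim
    case (elim d)
    have "(LINT x:S|lborel. \<bar>F x - p d x\<bar>) / \<delta> < \<epsilon>/2"
      using elim(2) \<delta> by (simp add: divide_less_eq mult.commute)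
    thus ?case
      using measure_sign_change_le[OF S F elim(1) \<delta>] n by (simp add: \<delta>_def)
  qed
qed

section \<open>Polynomial under-approximations of the parametric minimum\<close>

lemma sos2_le_uniform_bound:
  fixes m :: nat
  assumes "\<forall>l<m. is_sos2 (s l)"
  obtains K where "\<forall>l<m. sos2_le K (s l)"
proof -
  from assms obtain k where k: "\<forall>l<m. sos2_le (k l) (s l)" unfolding is_sos2_def by metis
  have "sos2_le (\<Sum>j<m. k j) (s l)" if l: "l < m" for l
  proof (rule sos2_le_mono[OF k[rule_format, OF l]])
    show "k l \<le> (\<Sum>j<m. k j)" using l by (intro member_le_sum) auto
  qed
  thus ?thesis using that by blast
qed

lemma eventually_rho_feasible:
  assumes p: "poly_le k p" and qm: "(\<lambda>x u. f x u - p x) \<in> qmodule g1 m1 g2 m2"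
  shows "\<exists>D. \<forall>d\<ge>D. p \<in> rho_feasible f g1 m1 g2 m2 d"
proof -
  obtain s0 s1 s2 where s: "is_sos2 s0" "\<forall>l<m1. is_sos2 (s1 l)" "\<forall>l<m2. is_sos2 (s2 l)"
    "\<And>x u. f x u - p x = s0 x u + (\<Sum>l<m1. s1 l x u * g1 l x) + (\<Sum>l<m2. s2 l x u * g2 l u)"
    using qmoduleE[OF qm] by blast
  obtain k0 where k0: "sos2_le k0 s0" using s(1) unfolding is_sos2_def by blast
  obtain K1 where K1: "\<forall>l<m1. sos2_le K1 (s1 l)" using sos2_le_uniform_bound[OF s(2)] by blast
  obtain K2 where K2: "\<forall>l<m2. sos2_le K2 (s2 l)" using sos2_le_uniform_bound[OF s(3)] by blast
  define c1 where "c1 l = nat \<lceil>real (pdeg (g1 l)) / 2\<rceil>" for l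
  define c2 where "c2 l = nat \<lceil>real (pdeg (g2 l)) / 2\<rceil>" for l
  define D where "D = k + k0 + K1 + K2 + (\<Sum>l<m1. c1 l) + (\<Sum>l<m2. c2 l)"
  have "p \<in> rho_feasible f g1 m1 g2 m2 d" if d: "d \<ge> D" for d
    unfolding rho_feasible_def
  proof (intro CollectI conjI exI allI impI)
    show "poly_le (2*d) p" by (rule poly_le_mono[OF p]) (use d in \<open>simp add: D_def\<close>)
    show "sos2_le d s0" by (rule sos2_le_mono[OF k0]) (use d in \<open>simp add: D_def\<close>)
    show "sos2_le (d - nat \<lceil>real (pdeg (g1 l)) / 2\<rceil>) (s1 l)" if l: "l < m1" for l
    proof -
      have "c1 l \<le> (\<Sum>l<m1. c1 l)" using l by (intro member_le_sum) auto
      hence "K1 \<le> d - c1 l" using d by (simp add: D_def)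
      thus ?thesis using sos2_le_mono[OF K1[rule_format, OF l]] by (simp add: c1_def)
    qed
    show "sos2_le (d - nat \<lceil>real (pdeg (g2 l)) / 2\<rceil>) (s2 l)" if l: "l < m2" for l
    proof -
      have "c2 l \<le> (\<Sum>l<m2. c2 l)" using l by (intro member_le_sum) auto
      hence "K2 \<le> d - c2 l" using d by (simp add: D_def)
      thus ?thesis using sos2_le_mono[OF K2[rule_format, OF l]] by (simp add: c2_def)
    qed
  qed (use s(4) in blast)
  thus ?thesis by blast
qed

locale parametric_minimum = archimedean_semialgebraic g1 m1 g2 m2
  for g1 :: "nat \<Rightarrow> real^'n::finite \<Rightarrow> real" and m1
    and g2 :: "nat \<Rightarrow> real^'p::finite \<Rightarrow> real" and m2 +
  fixes f :: "real^'n \<Rightarrow> real^'p \<Rightarrow> real" and F :: "real^'n \<Rightarrow> real"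
  assumes f_poly: "is_poly2 f"
    and compact: "compact (semialg g1 m1 \<times> semialg g2 m2)"
    and F_def: "\<forall>x\<in>semialg g1 m1. F x = (INF u\<in>semialg g2 m2. f x u)"
begin

abbreviation "\<Omega>1 \<equiv> semialg g1 m1"
abbreviation "\<Omega>2 \<equiv> semialg g2 m2"

lemma compact_\<Omega>1: "compact \<Omega>1"
proof -
  have "compact (fst ` (\<Omega>1 \<times> \<Omega>2))"
    by (rule compact_continuous_image[OF continuous_on_fst[OF continuous_on_id] compact])
  thus ?thesis using nonempty by simp
qed

lemma f_bdd_below: "x \<in> \<Omega>1 \<Longrightarrow> bdd_below (f x ` \<Omega>2)"
proof -
  assume x: "x \<in> \<Omega>1"
  have "compact ((\<lambda>z. f (fst z) (snd z)) ` (\<Omega>1 \<times> \<Omega>2))"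
    using compact continuous_on_subset[OF continuous_on_poly2[OF f_poly]]
    by (intro compact_continuous_image) auto
  hence "bdd_below ((\<lambda>z. f (fst z) (snd z)) ` (\<Omega>1 \<times> \<Omega>2))"
    by (simp add: bounded_imp_bdd_below compact_imp_bounded)
  moreover have "f x ` \<Omega>2 \<subseteq> (\<lambda>z. f (fst z) (snd z)) ` (\<Omega>1 \<times> \<Omega>2)" using x by force
  ultimately show ?thesis by (rule bdd_below_mono)
qed

lemma F_le: "x \<in> \<Omega>1 \<Longrightarrow> u \<in> \<Omega>2 \<Longrightarrow> F x \<le> f x u"
  using F_def cINF_lower[OF f_bdd_below] by simp

lemma F_greatest: "x \<in> \<Omega>1 \<Longrightarrow> (\<And>u. u \<in> \<Omega>2 \<Longrightarrow> c \<le> f x u) \<Longrightarrow> c \<le> F x"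
  using F_def cINF_greatest[of \<Omega>2 c "f x"] nonempty by auto

lemma continuous_on_F: "continuous_on \<Omega>1 F"
proof -
  have "continuous_on \<Omega>1 (\<lambda>x. INF u\<in>\<Omega>2. f x u)"
    using compact nonempty continuous_on_subset[OF continuous_on_poly2[OF f_poly]] f_bdd_below
    by (intro continuous_on_INF compact_uniformly_continuous) auto
  thus ?thesis using F_def by (simp cong: continuous_on_cong)
qed

lemma rho_feasible_le_F:
  assumes "p \<in> rho_feasible f g1 m1 g2 m2 d" and x: "x \<in> \<Omega>1"
  shows "p x \<le> F x"
proof (rule F_greatest[OF x])
  fix u assume u: "u \<in> \<Omega>2"
  from assms(1) obtain s0 s1 s2 where s: "sos2_le d s0"
      "\<forall>l<m1. sos2_le (d - nat \<lceil>real (pdeg (g1 l)) / 2\<rceil>) (s1 l)"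
      "\<forall>l<m2. sos2_le (d - nat \<lceil>real (pdeg (g2 l)) / 2\<rceil>) (s2 l)"
      "\<forall>x u. f x u - p x = s0 x u + (\<Sum>l<m1. s1 l x u * g1 l x) + (\<Sum>l<m2. s2 l x u * g2 l u)"
    unfolding rho_feasible_def by blast
  hence "(\<lambda>x u. f x u - p x) \<in> qmodule g1 m1 g2 m2"
    by (intro qmoduleI[of s0 _ s1 _ s2]) (auto simp: is_sos2_def)
  from qmodule_nonneg[OF this x u] show "p x \<le> f x u" by simp
qed

lemma continuous_on_rho_feasible:
  "p \<in> rho_feasible f g1 m1 g2 m2 d \<Longrightarrow> continuous_on UNIV p"
  unfolding rho_feasible_def by (blast intro: continuous_on_poly)

text \<open>Stone--Weierstrass gives a polynomial \<open>p\<close> with \<open>F - \<epsilon> \<le> p < F - \<epsilon>/3\<close> on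
  \<open>\<Omega>1\<close>; then \<open>f - p > 0\<close> on \<open>\<Omega>1 \<times> \<Omega>2\<close> and Putinar's theorem applies.\<close>

lemma exists_rho_feasible_approximation:
  assumes e: "\<epsilon> > 0"
  shows "\<exists>p D. (\<forall>d\<ge>D. p \<in> rho_feasible f g1 m1 g2 m2 d) \<and> (\<forall>x\<in>\<Omega>1. F x - \<epsilon> \<le> p x)"
proof -
  obtain q where q: "polynomial_function q" "\<forall>x\<in>\<Omega>1. norm (F x - q x) < \<epsilon>/3"
    using Stone_Weierstrass_polynomial_function[OF compact_\<Omega>1 continuous_on_F, of "\<epsilon>/3"] e by auto
  have "real_polynomial_function (id \<circ> q)"
    using q(1) bounded_linear_ident unfolding polynomial_function_def id_def by blast
  then obtain k where k: "poly_le k q"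
    using poly_le_if_real_polynomial_function by auto
  define p where "p x = q x - 2*\<epsilon>/3" for x
  have pk: "poly_le k p"
    using k poly2_le_add[OF _ poly2_le_mono[OF poly2_le_const], of k _ "- 2*\<epsilon>/3"]
    unfolding p_def poly_le_iff_poly2_le[where 'p='p] by simp
  have p_F: "F x - \<epsilon> \<le> p x" "p x + \<epsilon>/3 \<le> F x" if "x \<in> \<Omega>1" for x
  proof -
    have "\<bar>F x - q x\<bar> < \<epsilon>/3" using q(2) that by simp
    thus "F x - \<epsilon> \<le> p x" "p x + \<epsilon>/3 \<le> F x" unfolding p_def by linarith+
  qed
  have "is_poly2 (\<lambda>x u. f x u - p x)"
    using pk f_poly is_poly2_add[OF f_poly is_poly2_mult[OF is_poly2_const[of "-1"]]]
    unfolding poly_le_iff_poly2_le[where 'p='p] is_poly2_def by fastforce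
  hence "(\<lambda>x u. f x u - p x) \<in> qmodule g1 m1 g2 m2"
  proof (rule putinar_positivstellensatz)
    fix x u assume "x \<in> \<Omega>1" "u \<in> \<Omega>2"
    with F_le p_F(2) e show "f x u - p x > 0" by fastforce
  qed
  from eventually_rho_feasible[OF pk this] p_F(1) show ?thesis by blast
qed


lemma continuous_on_rho_optimal: "rho_optimal f g1 m1 g2 m2 d p \<Longrightarrow> continuous_on \<Omega>1 p"
  unfolding rho_optimal_def using continuous_on_rho_feasible continuous_on_subset by blast

lemma nonneg_on_\<Omega>2_iff_F_nonneg: "{x\<in>\<Omega>1. \<forall>u\<in>\<Omega>2. 0 \<le> f x u} = {x\<in>\<Omega>1. 0 \<le> F x}"
  using F_le F_greatest by (blast intro: order_trans)

lemma rho_optimal_L1_convergence: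
  assumes opt: "eventually (\<lambda>d. rho_optimal f g1 m1 g2 m2 d (pd d)) sequentially"
  shows "(\<lambda>d. LINT x:\<Omega>1|lborel. \<bar>F x - pd d x\<bar>) \<longlonglongrightarrow> 0"
proof (rule set_integral_abs_diff_tendsto_zero[OF compact_\<Omega>1 continuous_on_F])
  show "eventually (\<lambda>d. continuous_on \<Omega>1 (pd d) \<and> (\<forall>x\<in>\<Omega>1. pd d x \<le> F x)) sequentially"
    using opt by eventually_elim (meson continuous_on_rho_optimal rho_feasible_le_F rho_optimal_def)
  fix \<epsilon> :: real assume e: "\<epsilon> > 0"
  obtain q D where q: "\<forall>d\<ge>D. q \<in> rho_feasible f g1 m1 g2 m2 d" "\<forall>x\<in>\<Omega>1. F x - \<epsilon> \<le> q x"
    using exists_rho_feasible_approximation[OF e] by blast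
  have "eventually (\<lambda>d. (LINT x:\<Omega>1|lborel. q x) \<le> (LINT x:\<Omega>1|lborel. pd d x)) sequentially"
    using opt eventually_ge_at_top[of D] by eventually_elim (use q(1) in \<open>auto simp: rho_optimal_def\<close>)
  moreover have "continuous_on \<Omega>1 q"
    using continuous_on_rho_feasible q(1) continuous_on_subset by blast
  ultimately show "\<exists>q. continuous_on \<Omega>1 q \<and> (\<forall>x\<in>\<Omega>1. F x - \<epsilon> \<le> q x) \<and>
      eventually (\<lambda>d. (LINT x:\<Omega>1|lborel. q x) \<le> (LINT x:\<Omega>1|lborel. pd d x)) sequentially"
    using q(2) by blast
qed

end

theorem theorem3p2:
  fixes f :: "real^'n \<Rightarrow> real^'p \<Rightarrow> real"
    and g1 :: "nat \<Rightarrow> real^'n \<Rightarrow> real" and m1 :: nat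
    and g2 :: "nat \<Rightarrow> real^'p \<Rightarrow> real" and m2 :: nat
    and pd :: "nat \<Rightarrow> real^'n \<Rightarrow> real"
    and F :: "real^'n \<Rightarrow> real"
  assumes g1_poly: "\<forall>l<m1. is_poly (g1 l)"
    and g2_poly: "\<forall>l<m2. is_poly (g2 l)"
    and f_poly: "is_poly2 f"
    and compact: "compact (semialg g1 m1 \<times> semialg g2 m2)"
    and nonempty: "semialg g1 m1 \<times> semialg g2 m2 \<noteq> {}"
    and archimedean: "archimedean_qm g1 m1 g2 m2"
    and optimal: "\<exists>d0. \<forall>d\<ge>d0. rho_optimal f g1 m1 g2 m2 d (pd d)"
    and F_def: "\<forall>x\<in>semialg g1 m1. F x = (INF u\<in>semialg g2 m2. f x u)"
    and zero_null: "emeasure lborel {x\<in>semialg g1 m1. F x = 0} = 0"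
  shows "(\<lambda>d. LINT x:semialg g1 m1|lborel. \<bar>F x - pd d x\<bar>) \<longlonglongrightarrow> 0
       \<and> (\<lambda>d. measure lborel ({x\<in>semialg g1 m1. \<forall>u\<in>semialg g2 m2. 0 \<le> f x u}
                              - {x\<in>semialg g1 m1. 0 \<le> pd d x})) \<longlonglongrightarrow> 0"
proof -
  interpret parametric_minimum g1 m1 g2 m2 f F
    by unfold_locales (fact g1_poly g2_poly nonempty archimedean f_poly compact F_def)+
  have opt: "eventually (\<lambda>d. rho_optimal f g1 m1 g2 m2 d (pd d)) sequentially"
    using optimal by (simp add: eventually_sequentially)
  have L1: "(\<lambda>d. LINT x:\<Omega>1|lborel. \<bar>F x - pd d x\<bar>) \<longlonglongrightarrow> 0"
    by (rule rho_optimal_L1_convergence[OF opt])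
  have "eventually (\<lambda>d. continuous_on \<Omega>1 (pd d)) sequentially"
    using opt by (rule eventually_mono) (rule continuous_on_rho_optimal)
  from measure_sign_change_tendsto_zero[OF compact_\<Omega>1 continuous_on_F zero_null this L1]
  show ?thesis
    using L1 nonneg_on_\<Omega>2_iff_F_nonneg by simp
qed

end
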